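(* Let $d\ge1$ and let $\alpha=(\alpha_1,\dots,\alpha_d)\in\mathbb{R}^d$ be such that $1,\alpha_1,\dots,\alpha_d$ are linearly independent over $\mathbb{Q}$ and span (as a $\mathbb{Q}$-vector space) a real algebraic number field of degree $d+1$ over $\mathbb{Q}$ (e.g. $\alpha=(p^{1/(d+1)},\dots,p^{d/(d+1)})$ for a prime $p$). Define $N_1=1$ and, for $i\ge2$, let $N_i$ be the smallest integer $N>N_{i-1}$ with $\langle N\alpha\rangle<\langle N_{i-1}\alpha\rangle$; let $z^{(i)}=(z^{(i)}_1,\dots,z^{(i)}_d)$ where $z^{(i)}_j$ is the nearest integer to $N_i\alpha_j$. Then the family of rank-1 lattice point sets $(P_{N_i,z^{(i)}})_{i\ge2}$ is a quasi-uniform family of point sets over $[0,1]^d$; in particular there is a constant $C$, independent of $i$, with $\rho(P_{N_i,z^{(i)}})\le C$ for all $i\ge 2$.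
   Context: For $x\in\mathbb{R}^d$, $\langle x\rangle=\max_{1\le j\le d}\min_{k\in\mathbb{Z}}|x_j-k|$. For $N\in\mathbb{N}$ and $z\in\mathbb{Z}^d$ with $\gcd(N,z_1,\dots,z_d)=1$, the rank-1 lattice point set is $P_{N,z}=\{(\{nz_1/N\},\dots,\{nz_d/N\}) : n=0,1,\dots,N-1\}\subset[0,1)^d$, where $\{x\}=x-\lfloor x\rfloor$; it equals $\Lambda\cap[0,1)^d$ for the lattice $\Lambda=\frac1N z\mathbb{Z}+\mathbb{Z}^d$. For a finite point set $P\subset[0,1]^d$ with at least two points: covering radius $h(P)=\sup_{x\in[0,1]^d}\min_{y\in P}\|x-y\|_2$, separation radius $q(P)=\frac12\min_{x,y\in P,\,x\ne y}\|x-y\|_2$, mesh ratio $\rho(P)=h(P)/q(P)$. A family $(P_{N_i})_{i}$ of point sets in $[0,1]^d$ with $N_i=|P_{N_i}|$ is a quasi-uniform family if there is a constant $c>1$ with $N_i<N_{i+1}\le cN_i$ for all $i$, and a constant $C_d$ independent of $i$ with $\rho(P_{N_i})\le C_d$ for all $i$. *)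

theory Defs
  imports "HOL-Analysis.Analysis"
begin

text \<open>Points of R^d are vectors of type real^'n, d = CARD('n) (so d \<ge> 1).\<close>

definition unit_cube :: "(real^'n::finite) set" where
  "unit_cube = {x. \<forall>j. 0 \<le> x$j \<and> x$j \<le> 1}"

definition int_dist :: "real \<Rightarrow> real" where
  "int_dist t = (INF k::int. \<bar>t - of_int k\<bar>)"

definition torus_norm :: "real^'n::finite \<Rightarrow> real" where
  "torus_norm x = Max (range (\<lambda>j. int_dist (x$j)))"

text \<open>The sequence N_i (indexed from 1; the value at 0 is irrelevant).\<close>
fun Nseq :: "real^'n::finite \<Rightarrow> nat \<Rightarrow> nat" where
  "Nseq \<alpha> 0 = 1"
| "Nseq \<alpha> (Suc 0) = 1"
| "Nseq \<alpha> (Suc (Suc i)) =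
     (LEAST M. M > Nseq \<alpha> (Suc i) \<and>
        torus_norm (of_nat M *\<^sub>R \<alpha>) < torus_norm (of_nat (Nseq \<alpha> (Suc i)) *\<^sub>R \<alpha>))"

definition zvec :: "real^'n::finite \<Rightarrow> nat \<Rightarrow> int^'n" where
  "zvec \<alpha> i = (\<chi> j. round (of_nat (Nseq \<alpha> i) * \<alpha>$j))"

definition rank1_lattice :: "nat \<Rightarrow> int^'n::finite \<Rightarrow> (real^'n) set" where
  "rank1_lattice N z = {(\<chi> j. frac (of_nat n * of_int (z$j) / of_nat N)) | n. n < N}"

definition rank1_admissible :: "nat \<Rightarrow> int^'n::finite \<Rightarrow> bool" where
  "rank1_admissible N z \<longleftrightarrow> Gcd (insert (int N) (range (\<lambda>j. z$j))) = 1"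

definition covering_radius :: "(real^'n::finite) set \<Rightarrow> real" where
  "covering_radius P = (SUP x\<in>unit_cube. INF y\<in>P. dist x y)"

definition separation_radius :: "(real^'n::finite) set \<Rightarrow> real" where
  "separation_radius P = Inf {dist x y | x y. x \<in> P \<and> y \<in> P \<and> x \<noteq> y} / 2"

definition mesh_ratio :: "(real^'n::finite) set \<Rightarrow> real" where
  "mesh_ratio P = covering_radius P / separation_radius P"

definition quasi_uniform_family :: "nat \<Rightarrow> (nat \<Rightarrow> (real^'n::finite) set) \<Rightarrow> bool" where
  "quasi_uniform_family i0 P \<longleftrightarrow>
     (\<forall>i\<ge>i0. finite (P i) \<and> P i \<subseteq> unit_cube \<and> card (P i) \<ge> 2) \<and>
     (\<exists>c::real. c > 1 \<and> (\<forall>i\<ge>i0. card (P i) < card (P (Suc i)) \<and>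
                                  real (card (P (Suc i))) \<le> c * real (card (P i)))) \<and>
     (\<exists>C::real. \<forall>i\<ge>i0. mesh_ratio (P i) \<le> C)"

definition rat_span :: "real^'n::finite \<Rightarrow> real set" where
  "rat_span \<alpha> = {c0 + (\<Sum>j\<in>UNIV. c$j * \<alpha>$j) | c0 c. c0 \<in> \<rat> \<and> (\<forall>j. c$j \<in> \<rat>)}"

definition rat_lin_indep_1 :: "real^'n::finite \<Rightarrow> bool" where
  "rat_lin_indep_1 \<alpha> \<longleftrightarrow>
     (\<forall>c0 c. c0 \<in> \<rat> \<and> (\<forall>j. c$j \<in> \<rat>) \<and> c0 + (\<Sum>j\<in>UNIV. c$j * \<alpha>$j) = 0
        \<longrightarrow> c0 = 0 \<and> (\<forall>j. c$j = 0))"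

text \<open>The Q-span is a subfield of R (then of degree d+1 by linear independence,
  hence an algebraic number field).\<close>
definition span_is_field :: "real^'n::finite \<Rightarrow> bool" where
  "span_is_field \<alpha> \<longleftrightarrow>
     (\<forall>x\<in>rat_span \<alpha>. \<forall>y\<in>rat_span \<alpha>. x * y \<in> rat_span \<alpha>) \<and>
     (\<forall>x\<in>rat_span \<alpha>. x \<noteq> 0 \<longrightarrow> inverse x \<in> rat_span \<alpha>)"

end

theory Submission
  imports Defs
begin

text \<open>
  Let \<open>N\<close> be a best approximation of \<open>\<alpha>\<close> and \<open>\<delta> = \<langle>N\<alpha>\<rangle>\<close>. Every nonzero vector of the lattice
  \<open>\<Lambda> = z\<int>/N + \<int>\<^sup>d\<close> has a coordinate of size at least \<open>\<delta>/2\<close>, since a shorter vector would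
  produce a smaller multiple \<open>m\<alpha>\<close> closer to \<open>\<int>\<^sup>d\<close>; this bounds the separation radius from below
  and also gives \<open>gcd(N, z) = 1\<close> and \<open>|P\<^sub>N\<^sub>,\<^sub>z| = N\<close>. A lattice of covolume \<open>1/N\<close> without
  nonzero vectors shorter than \<open>\<delta>/2\<close> has covering radius \<open>O(1/(N\<delta>\<^sup>d\<^sup>-\<^sup>1) + \<delta>)\<close>: near a deepest hole
  \<open>x\<close>, a tube of radius \<open>\<delta>/8\<close> around the segment from \<open>-x\<close> to \<open>x\<close> meets the lattice only in \<open>0\<close>,
  and counting the points of a fine grid in that tube modulo \<open>\<Lambda>\<close> bounds \<open>|x|\<close>. Hence the mesh
  ratio is \<open>O(1 + 1/(N\<delta>\<^sup>d))\<close>.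

  Because \<open>1, \<alpha>\<^sub>1, \<dots>, \<alpha>\<^sub>d\<close> span a number field, the norm of a nonzero \<open>t + h \<bullet> \<alpha>\<close> with
  \<open>|h| \<le> H\<close> is a nonzero rational with bounded denominator and of size \<open>O(|t + h \<bullet> \<alpha>| H\<^sup>d)\<close>.
  Together with a pigeonhole argument this shows that \<open>\<alpha>\<close> is badly approximable,
  \<open>N \<langle>N\<alpha>\<rangle>\<^sup>d \<ge> c > 0\<close>, which bounds the mesh ratio uniformly. Finally Dirichlet's theorem gives
  \<open>N\<^sub>i\<^sub>+\<^sub>1 \<le> (2/\<langle>N\<^sub>i\<alpha>\<rangle>)\<^sup>d \<le> 2\<^sup>d N\<^sub>i / c\<close>.
\<close>

section \<open>Distance to the nearest integer and the torus norm\<close>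

lemma int_dist_eq_round: "int_dist t = \<bar>t - of_int (round t)\<bar>"
  unfolding int_dist_def by (rule cInf_eq_minimum) (auto intro: round_diff_minimal)

lemma int_dist_le: "int_dist t \<le> \<bar>t - of_int k\<bar>"
  unfolding int_dist_eq_round by (rule round_diff_minimal)

lemma int_dist_nonneg: "int_dist t \<ge> 0"
  unfolding int_dist_eq_round by simp

lemma int_dist_le_half: "int_dist t \<le> 1/2"
  unfolding int_dist_eq_round by (metis abs_minus_commute of_int_round_abs_le)

lemma int_dist_le_abs: "int_dist t \<le> \<bar>t\<bar>"
  using int_dist_le[of t 0] by simp

lemma int_dist_add_le: "int_dist (a + b) \<le> int_dist a + \<bar>b\<bar>"
  using int_dist_le[of "a + b" "round a"] by (simp add: int_dist_eq_round)

lemma int_dist_add_Ints: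
  assumes "s \<in> \<int>"
  shows "int_dist (t + s) = int_dist t"
proof -
  have "int_dist (t + s) \<le> int_dist t" if "s \<in> \<int>" for t s :: real
  proof -
    from that obtain k where "s = of_int k" by (rule Ints_cases)
    then show ?thesis using int_dist_le[of "t + s" "round t + k"] by (simp add: int_dist_eq_round)
  qed
  from this[OF assms, of t] this[of "- s" "t + s"] assms show ?thesis
    by (simp add: order_antisym)
qed

lemma int_dist_Ints: "s \<in> \<int> \<Longrightarrow> int_dist s = 0"
  using int_dist_add_Ints[of s 0] int_dist_le_abs[of 0] int_dist_nonneg[of 0] by simp

lemma int_dist_eq_0_iff: "int_dist t = 0 \<longleftrightarrow> t \<in> \<int>"
proof
  assume "int_dist t = 0"
  then have "t = of_int (round t)" by (simp add: int_dist_eq_round)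
  then show "t \<in> \<int>" by (metis Ints_of_int)
qed (rule int_dist_Ints)

lemma int_dist_minus: "int_dist (- t) = int_dist t"
proof -
  have "int_dist (- t) \<le> int_dist t" for t
    using int_dist_le[of "- t" "- round t"] by (simp add: int_dist_eq_round abs_minus_commute)
  from this[of t] this[of "- t"] show ?thesis by simp
qed

lemma int_dist_le_torus_norm: "int_dist (x$j) \<le> torus_norm x"
  unfolding torus_norm_def by (rule Max_ge) auto

lemma torus_norm_attained: "\<exists>j. torus_norm x = int_dist (x$j)"
proof -
  have "Max (range (\<lambda>j. int_dist (x$j))) \<in> range (\<lambda>j. int_dist (x$j))"
    by (rule Max_in) auto
  then show ?thesis unfolding torus_norm_def by (metis (no_types, lifting) imageE)
qed

lemma torus_norm_le_iff: "torus_norm x \<le> e \<longleftrightarrow> (\<forall>j. int_dist (x$j) \<le> e)"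
  by (metis order.trans torus_norm_attained int_dist_le_torus_norm)

lemma torus_norm_less_iff: "torus_norm x < e \<longleftrightarrow> (\<forall>j. int_dist (x$j) < e)"
  by (metis order.strict_trans1 torus_norm_attained int_dist_le_torus_norm)

lemma torus_norm_le_half: "torus_norm x \<le> 1/2"
  using int_dist_le_half torus_norm_le_iff by blast

lemma torus_norm_nonneg: "torus_norm x \<ge> 0"
  by (meson int_dist_nonneg order.trans int_dist_le_torus_norm)

lemma torus_norm_of_int_scaleR: "torus_norm (of_int m *\<^sub>R x) = torus_norm (of_nat (nat \<bar>m\<bar>) *\<^sub>R x)"
proof -
  have "int_dist (of_int m * x$j) = int_dist (of_nat (nat \<bar>m\<bar>) * x$j)" for j
  proof (cases "m \<ge> 0")
    case False
    then have "of_nat (nat \<bar>m\<bar>) * x$j = - (of_int m * x$j)" by simp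
    then show ?thesis by (simp add: int_dist_minus)
  qed simp
  then show ?thesis unfolding torus_norm_def by simp
qed

abbreviation approx_error :: "real^'n::finite \<Rightarrow> nat \<Rightarrow> real" where
  "approx_error \<alpha> M \<equiv> torus_norm (of_nat M *\<^sub>R \<alpha>)"

lemma int_dist_le_approx_error: "int_dist (of_nat M * \<alpha>$j) \<le> approx_error \<alpha> M"
  using int_dist_le_torus_norm[of "of_nat M *\<^sub>R \<alpha>" j] by simp

lemma approx_error_pos:
  fixes \<alpha> :: "real^'n::finite"
  assumes "rat_lin_indep_1 \<alpha>" "M \<ge> 1"
  shows "approx_error \<alpha> M > 0"
proof (rule ccontr)
  assume "\<not> approx_error \<alpha> M > 0"
  then have "approx_error \<alpha> M = 0" using torus_norm_nonneg[of "of_nat M *\<^sub>R \<alpha>"] by linarith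
  then obtain j where "int_dist (of_nat M * \<alpha>$j) = 0"
    using torus_norm_attained[of "of_nat M *\<^sub>R \<alpha>"] by auto
  then obtain k where k: "of_nat M * \<alpha>$j = of_int k" by (metis int_dist_eq_0_iff Ints_cases)
  define c :: "real^'n" where "c = (\<chi> i. if i = j then of_nat M else 0)"
  have "(\<Sum>i\<in>UNIV. c$i * \<alpha>$i) = of_nat M * \<alpha>$j"
    unfolding c_def by (simp add: if_distrib[where f="\<lambda>x. x * _"] sum.delta cong: if_cong)
  then have "of_int (- k) + (\<Sum>i\<in>UNIV. c$i * \<alpha>$i) = 0" using k by simp
  moreover have "\<forall>i. c$i \<in> \<rat>" unfolding c_def by simp
  ultimately have "c$j = 0" using assms(1) unfolding rat_lin_indep_1_def by (metis Rats_of_int)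
  then show False using assms(2) unfolding c_def by simp
qed

section \<open>Dirichlet's simultaneous approximation theorem\<close>

lemma int_dist_diff_lt_if_same_cell:
  assumes "L > 0" "\<lfloor>L * frac a\<rfloor> = \<lfloor>L * frac b\<rfloor>"
  shows "int_dist (b - a) < 1 / L"
proof -
  have "\<bar>L * frac b - L * frac a\<bar> < 1"
    using assms(2) floor_correct[of "L * frac a"] floor_correct[of "L * frac b"] by linarith
  moreover have "\<bar>L * frac b - L * frac a\<bar> = L * \<bar>frac b - frac a\<bar>"
    using assms(1) by (simp add: abs_mult right_diff_distrib[symmetric])
  ultimately have "\<bar>frac b - frac a\<bar> < 1 / L"
    using assms(1) by (simp add: pos_less_divide_eq mult.commute)
  moreover have "b - a = (frac b - frac a) + of_int (\<lfloor>b\<rfloor> - \<lfloor>a\<rfloor>)"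
    unfolding frac_def by simp
  ultimately show ?thesis
    using int_dist_add_Ints[of "of_int (\<lfloor>b\<rfloor> - \<lfloor>a\<rfloor>)" "frac b - frac a"] int_dist_le_abs
    by (metis Ints_of_int order.strict_trans1)
qed

theorem dirichlet_approximation:
  fixes \<alpha> :: "real^'n::finite"
  assumes "L \<ge> 1"
  shows "\<exists>n. 1 \<le> n \<and> n \<le> L ^ CARD('n) \<and> approx_error \<alpha> n < 1 / real L"
proof -
  define cell where "cell n = (\<lambda>j::'n. nat \<lfloor>real L * frac (real n * \<alpha>$j)\<rfloor>)" for n :: nat
  have "nat \<lfloor>real L * frac (real n * \<alpha>$j)\<rfloor> < L" for n j
  proof -
    have "real L * frac (real n * \<alpha>$j) < real L"
      using assms frac_lt_1[of "real n * \<alpha>$j"] by simp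
    then have "\<lfloor>real L * frac (real n * \<alpha>$j)\<rfloor> < int L" by (simp add: floor_less_iff)
    then show ?thesis using assms by linarith
  qed
  then have "cell n \<in> PiE UNIV (\<lambda>_. {..<L})" for n unfolding cell_def by auto
  then have "\<not> inj_on cell {0..L ^ CARD('n)}"
    using card_inj_on_le[of cell "{0..L ^ CARD('n)}" "PiE UNIV (\<lambda>_. {..<L})"]
    by (force simp: card_PiE finite_PiE)
  then obtain n n' where nn: "n < n'" "n' \<le> L ^ CARD('n)" "cell n = cell n'"
    unfolding inj_on_def by (metis atLeastAtMost_iff linorder_neqE_nat)
  have "int_dist ((of_nat (n' - n) *\<^sub>R \<alpha>)$j) < 1 / real L" for j
  proof -
    have "\<lfloor>real L * frac (real n * \<alpha>$j)\<rfloor> = \<lfloor>real L * frac (real n' * \<alpha>$j)\<rfloor>"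
      using fun_cong[OF nn(3), of j] unfolding cell_def by (simp add: eq_nat_nat_iff)
    then have "int_dist (real n' * \<alpha>$j - real n * \<alpha>$j) < 1 / real L"
      using assms by (intro int_dist_diff_lt_if_same_cell) auto
    then show ?thesis using nn(1) by (simp add: of_nat_diff left_diff_distrib)
  qed
  then show ?thesis using nn by (intro exI[of _ "n' - n"]) (auto simp: torus_norm_less_iff)
qed

corollary dirichlet_approximation_real:
  fixes \<alpha> :: "real^'n::finite"
  assumes "0 < \<delta>" "\<delta> \<le> 1"
  shows "\<exists>n\<ge>1. real n \<le> (2 / \<delta>) ^ CARD('n) \<and> approx_error \<alpha> n < \<delta>"
proof -
  define L where "L = nat \<lfloor>1 / \<delta>\<rfloor> + 1"
  have "real L = of_int \<lfloor>1 / \<delta>\<rfloor> + 1"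
    using assms by (simp add: L_def)
  moreover have "1 \<le> 1 / \<delta>" using assms by simp
  moreover have "2 / \<delta> = 1 / \<delta> + 1 / \<delta>" by simp
  ultimately have L: "1 / \<delta> < real L" "real L \<le> 2 / \<delta>"
    using floor_correct[of "1 / \<delta>"] by linarith+
  have "L \<ge> 1" by (simp add: L_def)
  then obtain n where n: "1 \<le> n" "n \<le> L ^ CARD('n)" "approx_error \<alpha> n < 1 / real L"
    using dirichlet_approximation[of L \<alpha>] by blast
  have "real n \<le> real L ^ CARD('n)" using n(2) by (metis of_nat_le_iff of_nat_power)
  also have "\<dots> \<le> (2 / \<delta>) ^ CARD('n)" using L by (intro power_mono) auto
  finally have "real n \<le> (2 / \<delta>) ^ CARD('n)" .
  moreover have "1 / real L < \<delta>"
    using L assms by (simp add: divide_less_eq mult.commute)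
  ultimately show ?thesis using n by (intro exI[of _ n]) auto
qed

section \<open>Best approximations\<close>

definition best_approximation :: "real^'n::finite \<Rightarrow> nat \<Rightarrow> bool" where
  "best_approximation \<alpha> N \<longleftrightarrow>
     1 \<le> N \<and> (\<forall>M. 1 \<le> M \<and> M < N \<longrightarrow> approx_error \<alpha> N < approx_error \<alpha> M)"

lemma best_approximation_minimal:
  assumes "best_approximation \<alpha> N" "1 \<le> M" "M \<le> N"
  shows "approx_error \<alpha> N \<le> approx_error \<alpha> M"
proof (cases "M = N")
  case False
  then have "M < N" using assms(3) by simp
  then show ?thesis using assms(1,2) unfolding best_approximation_def by (simp add: less_imp_le)
qed simp

lemma best_approximation_exists_better:
  assumes "best_approximation \<alpha> N" "approx_error \<alpha> N > 0"
  shows "\<exists>M>N. approx_error \<alpha> M < approx_error \<alpha> N"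
proof -
  have "approx_error \<alpha> N \<le> 1"
    using torus_norm_le_half[of "of_nat N *\<^sub>R \<alpha>"] by simp
  then obtain M where M: "M \<ge> 1" "approx_error \<alpha> M < approx_error \<alpha> N"
    using dirichlet_approximation_real assms(2) by blast
  have "N < M"
  proof (rule ccontr)
    assume "\<not> N < M"
    then have "approx_error \<alpha> N \<le> approx_error \<alpha> M"
      using best_approximation_minimal[OF assms(1) M(1)] by simp
    then show False using M(2) by simp
  qed
  then show ?thesis using M(2) by blast
qed

context
  fixes \<alpha> :: "real^'n::finite"
  assumes irrational: "\<And>M. M \<ge> 1 \<Longrightarrow> approx_error \<alpha> M > 0"
begin

lemma Nseq_Suc_Suc:
  assumes "best_approximation \<alpha> (Nseq \<alpha> (Suc k))"
  shows "Nseq \<alpha> (Suc k) < Nseq \<alpha> (Suc (Suc k))"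
    and "approx_error \<alpha> (Nseq \<alpha> (Suc (Suc k))) < approx_error \<alpha> (Nseq \<alpha> (Suc k))"
    and "\<And>M. Nseq \<alpha> (Suc k) < M \<Longrightarrow> approx_error \<alpha> M < approx_error \<alpha> (Nseq \<alpha> (Suc k))
           \<Longrightarrow> Nseq \<alpha> (Suc (Suc k)) \<le> M"
proof -
  let ?P = "\<lambda>M. Nseq \<alpha> (Suc k) < M \<and> approx_error \<alpha> M < approx_error \<alpha> (Nseq \<alpha> (Suc k))"
  have "approx_error \<alpha> (Nseq \<alpha> (Suc k)) > 0"
    using irrational assms unfolding best_approximation_def by simp
  then have "\<exists>M. ?P M" using best_approximation_exists_better[OF assms] by simp
  then have "?P (LEAST M. ?P M)" by (rule LeastI_ex)
  then have "?P (Nseq \<alpha> (Suc (Suc k)))" by simp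
  then show "Nseq \<alpha> (Suc k) < Nseq \<alpha> (Suc (Suc k))"
    and "approx_error \<alpha> (Nseq \<alpha> (Suc (Suc k))) < approx_error \<alpha> (Nseq \<alpha> (Suc k))" by auto
  show "Nseq \<alpha> (Suc (Suc k)) \<le> M"
    if "Nseq \<alpha> (Suc k) < M" "approx_error \<alpha> M < approx_error \<alpha> (Nseq \<alpha> (Suc k))" for M
  proof -
    have "(LEAST M. ?P M) \<le> M" using that by (intro Least_le) simp
    then show ?thesis by simp
  qed
qed

lemma best_approximation_Nseq: "best_approximation \<alpha> (Nseq \<alpha> (Suc k))"
proof (induction k)
  case 0
  then show ?case by (simp add: best_approximation_def)
next
  case (Suc k)
  note next_props = Nseq_Suc_Suc[OF Suc.IH]
  show ?case
    unfolding best_approximation_def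
  proof (intro conjI allI impI)
    show "1 \<le> Nseq \<alpha> (Suc (Suc k))"
      using next_props(1) by linarith
    fix M assume M: "1 \<le> M \<and> M < Nseq \<alpha> (Suc (Suc k))"
    have "approx_error \<alpha> (Nseq \<alpha> (Suc k)) \<le> approx_error \<alpha> M"
    proof (cases "M \<le> Nseq \<alpha> (Suc k)")
      case True
      then show ?thesis using best_approximation_minimal[OF Suc.IH] M by simp
    next
      case False
      then have "\<not> approx_error \<alpha> M < approx_error \<alpha> (Nseq \<alpha> (Suc k))"
        using next_props(3)[of M] M by auto
      then show ?thesis by simp
    qed
    then show "approx_error \<alpha> (Nseq \<alpha> (Suc (Suc k))) < approx_error \<alpha> M"
      using next_props(2) by linarith
  qed
qed

lemma Nseq_strict_mono: "Nseq \<alpha> (Suc k) < Nseq \<alpha> (Suc (Suc k))"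
  using Nseq_Suc_Suc(1)[OF best_approximation_Nseq] .

lemma Nseq_Suc_Suc_le:
  "real (Nseq \<alpha> (Suc (Suc k))) \<le> (2 / approx_error \<alpha> (Nseq \<alpha> (Suc k))) ^ CARD('n)"
proof -
  let ?N = "Nseq \<alpha> (Suc k)"
  have N: "best_approximation \<alpha> ?N" by (rule best_approximation_Nseq)
  then have "0 < approx_error \<alpha> ?N"
    using irrational unfolding best_approximation_def by simp
  moreover have "approx_error \<alpha> ?N \<le> 1"
    using torus_norm_le_half[of "of_nat ?N *\<^sub>R \<alpha>"] by simp
  ultimately obtain n where n: "n \<ge> 1" "real n \<le> (2 / approx_error \<alpha> ?N) ^ CARD('n)"
    "approx_error \<alpha> n < approx_error \<alpha> ?N"
    using dirichlet_approximation_real by blast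
  have "?N < n"
  proof (rule ccontr)
    assume "\<not> ?N < n"
    then show False using best_approximation_minimal[OF N n(1)] n(3) by simp
  qed
  then have "Nseq \<alpha> (Suc (Suc k)) \<le> n" using Nseq_Suc_Suc(3)[OF N] n(3) by blast
  then show ?thesis using n(2) by linarith
qed

end

section \<open>Linear forms in a basis of a number field\<close>

lemma sum_UNIV_option:
  "(\<Sum>i\<in>(UNIV::'a::finite option set). g i) = g None + (\<Sum>j\<in>UNIV. g (Some j))"
  by (simp add: UNIV_option_conv sum.reindex)

lemma prod_UNIV_option:
  "(\<Prod>i\<in>(UNIV::'a::finite option set). g i) = g None * (\<Prod>j\<in>UNIV. g (Some j))"
  by (simp add: UNIV_option_conv prod.reindex)

lemma finite_Rats_common_denominator:
  assumes "finite S" "S \<subseteq> \<rat>"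
  shows "\<exists>D::int. D > 0 \<and> (\<forall>q\<in>S. of_int D * (q::real) \<in> \<int>)"
  using assms
proof (induction S rule: finite_induct)
  case empty
  then show ?case by (intro exI[of _ 1]) simp
next
  case (insert q S)
  then obtain D where D: "D > 0" "\<forall>q\<in>S. of_int D * q \<in> \<int>" by auto
  obtain a b where ab: "b > 0" "q = of_int a / of_int b"
    using insert.prems by (auto elim: Rats_cases')
  have "of_int (D * b) * q = of_int (D * a)" using ab by simp
  moreover have "of_int (D * b) * q' \<in> \<int>" if "q' \<in> S" for q'
    using D(2) that Ints_mult[OF Ints_of_int[of b]] by (fastforce simp: mult.assoc mult.left_commute)
  ultimately show ?case using D ab by (intro exI[of _ "D * b"]) (auto simp: zero_less_mult_iff)
qed

lemma Ints_det:
  fixes A :: "real^('m::finite)^'m"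
  assumes "\<And>i j. A$i$j \<in> \<int>"
  shows "det A \<in> \<int>"
  unfolding det_def using assms by (intro Ints_sum Ints_mult Ints_prod) auto

lemma Ints_det_scaled:
  fixes A :: "real^('m::finite)^'m"
  assumes "\<And>i j. of_int D * A$i$j \<in> \<int>"
  shows "of_int D ^ CARD('m) * det A \<in> \<int>"
proof -
  let ?DA = "(\<chi> i. of_int D *s A$i) :: real^'m^'m"
  have "det ?DA = of_int D ^ CARD('m) * det A"
    using det_rows_mul[of "\<lambda>_. of_int D" "\<lambda>i. A$i"] by simp
  moreover have "det ?DA \<in> \<int>"
    using assms by (intro Ints_det) simp
  ultimately show ?thesis by simp
qed

lemma det_eq_eigenvalue_mult:
  fixes A :: "real^('m::finite)^'m" and v :: "real^'m" and x :: real
  assumes "A *v v = x *\<^sub>R v" "v$k = 1"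
  shows "det A = x * det ((\<chi> i. if i = k then v else column i A) :: real^'m^'m)"
proof -
  let ?A' = "(\<chi> i j. if j = k then (A *v v)$i else A$i$j) :: real^'m^'m"
  have "det ?A' = det A" using cramer_lemma[of k A v] assms(2) by simp
  moreover have "transpose ?A' = (\<chi> i. if i = k then x *s v else column i A)"
    by (simp add: vec_eq_iff transpose_def column_def assms(1))
  then have "det ?A' = det (\<chi> i. if i = k then x *s v else column i A)"
    by (metis (no_types) det_transpose[of ?A'])
  moreover have "\<dots> = x * det ((\<chi> i. if i = k then v else column i A) :: real^'m^'m)"
    by (rule det_row_mul)
  ultimately show ?thesis by simp
qed

lemma abs_det_le_prod_row_bounds:
  fixes Q :: "real^('m::finite)^'m"
  assumes "\<And>i j. \<bar>Q$i$j\<bar> \<le> b i"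
  shows "\<bar>det Q\<bar> \<le> fact CARD('m) * (\<Prod>i\<in>UNIV. b i)"
proof -
  let ?P = "{p. p permutes (UNIV::'m set)}"
  have "\<bar>det Q\<bar> \<le> (\<Sum>p\<in>?P. \<bar>of_int (sign p) * (\<Prod>i\<in>UNIV. Q$i$p i)\<bar>)"
    unfolding det_def by (rule sum_abs)
  also have "\<dots> \<le> (\<Sum>p\<in>?P. \<Prod>i\<in>UNIV. b i)"
  proof (rule sum_mono)
    fix p :: "'m \<Rightarrow> 'm"
    have "\<bar>of_int (sign p) :: real\<bar> = 1" by (simp add: sign_def)
    then have "\<bar>of_int (sign p) * (\<Prod>i\<in>UNIV. Q$i$p i)\<bar> = (\<Prod>i\<in>UNIV. \<bar>Q$i$p i\<bar>)"
      by (simp add: abs_mult abs_prod)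
    also have "\<dots> \<le> (\<Prod>i\<in>UNIV. b i)" by (intro prod_mono) (use assms in auto)
    finally show "\<bar>of_int (sign p) * (\<Prod>i\<in>UNIV. Q$i$p i)\<bar> \<le> (\<Prod>i\<in>UNIV. b i)" .
  qed
  also have "\<dots> = fact CARD('m) * (\<Prod>i\<in>UNIV. b i)"
    by (simp add: card_permutations)
  finally show ?thesis .
qed

definition homog :: "real^'n::finite \<Rightarrow> real^('n option)" where
  "homog \<alpha> = (\<chi> i. case i of None \<Rightarrow> 1 | Some j \<Rightarrow> \<alpha>$j)"

lemma homog_None [simp]: "homog \<alpha> $ None = 1"
  and homog_Some [simp]: "homog \<alpha> $ Some j = \<alpha>$j"
  by (simp_all add: homog_def)

lemma sum_homog: "(\<Sum>l\<in>UNIV. w$l * homog \<alpha> $ l) = w$None + (\<Sum>j\<in>UNIV. w$Some j * \<alpha>$j)"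
  by (simp add: sum_UNIV_option)

lemma rat_span_homog:
  "x \<in> rat_span \<alpha> \<longleftrightarrow> (\<exists>w. (\<forall>l. w$l \<in> \<rat>) \<and> x = (\<Sum>l\<in>UNIV. w$l * homog \<alpha> $ l))"
proof
  assume "x \<in> rat_span \<alpha>"
  then obtain c0 c where c: "c0 \<in> \<rat>" "\<forall>j. c$j \<in> \<rat>" "x = c0 + (\<Sum>j\<in>UNIV. c$j * \<alpha>$j)"
    unfolding rat_span_def by blast
  let ?w = "\<chi> l. case l of None \<Rightarrow> c0 | Some j \<Rightarrow> c$j"
  have "\<forall>l. ?w$l \<in> \<rat>" using c by (simp split: option.split)
  moreover have "x = (\<Sum>l\<in>UNIV. ?w$l * homog \<alpha> $ l)" using c by (subst sum_homog) simp
  ultimately show "\<exists>w. (\<forall>l. w$l \<in> \<rat>) \<and> x = (\<Sum>l\<in>UNIV. w$l * homog \<alpha> $ l)" by blast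
next
  assume "\<exists>w. (\<forall>l. w$l \<in> \<rat>) \<and> x = (\<Sum>l\<in>UNIV. w$l * homog \<alpha> $ l)"
  then obtain w where w: "\<forall>l. w$l \<in> \<rat>" "x = (\<Sum>l\<in>UNIV. w$l * homog \<alpha> $ l)"
    by blast
  then have "x = w$None + (\<Sum>j\<in>UNIV. (\<chi> j. w$Some j)$j * \<alpha>$j)"
    by (simp add: sum_homog)
  then show "x \<in> rat_span \<alpha>"
    unfolding rat_span_def using w(1) by (intro CollectI exI[of _ "w$None"] exI[of _ "\<chi> j. w$Some j"]) simp
qed

lemma rat_lin_indep_1_homog:
  assumes "rat_lin_indep_1 \<alpha>" "\<forall>l. w$l \<in> \<rat>" "(\<Sum>l\<in>UNIV. w$l * homog \<alpha> $ l) = 0"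
  shows "w = 0"
proof -
  let ?c = "\<chi> j. w$Some j"
  have "w$None + (\<Sum>j\<in>UNIV. ?c$j * \<alpha>$j) = 0"
    using assms(3) by (simp add: sum_homog)
  moreover have "w$None \<in> \<rat>" "\<forall>j. ?c$j \<in> \<rat>" using assms(2) by auto
  ultimately have "w$None = 0" "\<forall>j. ?c$j = 0"
    using assms(1) unfolding rat_lin_indep_1_def by blast+
  then have "w$l = 0" for l by (cases l) auto
  then show ?thesis by (simp add: vec_eq_iff)
qed

locale number_field_basis =
  fixes \<alpha> :: "real^'n::finite"
  assumes lin_indep: "rat_lin_indep_1 \<alpha>" and span_field: "span_is_field \<alpha>"
begin

lemma homog_in_rat_span: "homog \<alpha> $ i \<in> rat_span \<alpha>"
proof -
  have "(\<Sum>l\<in>UNIV. axis i 1 $ l * homog \<alpha> $ l) = homog \<alpha> $ i"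
    by (simp add: axis_def if_distrib[where f="\<lambda>x. x * _"] sum.delta cong: if_cong)
  moreover have "\<forall>l. axis i 1 $ l \<in> \<rat>" by (simp add: axis_def)
  ultimately show ?thesis unfolding rat_span_homog by (intro exI[of _ "axis i 1"]) simp
qed

lemma alpha_in_rat_span: "\<alpha>$j \<in> rat_span \<alpha>"
  using homog_in_rat_span[of "Some j"] by simp

lemma rat_span_mult: "x \<in> rat_span \<alpha> \<Longrightarrow> y \<in> rat_span \<alpha> \<Longrightarrow> x * y \<in> rat_span \<alpha>"
  using span_field unfolding span_is_field_def by blast

lemma rat_span_inverse: "x \<in> rat_span \<alpha> \<Longrightarrow> x \<noteq> 0 \<Longrightarrow> inverse x \<in> rat_span \<alpha>"
  using span_field unfolding span_is_field_def by blast

definition coords :: "real \<Rightarrow> real^('n option)" where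
  "coords x = (SOME w. (\<forall>l. w$l \<in> \<rat>) \<and> x = (\<Sum>l\<in>UNIV. w$l * homog \<alpha> $ l))"

lemma coords:
  assumes "x \<in> rat_span \<alpha>"
  shows "coords x $ l \<in> \<rat>" and "(\<Sum>l\<in>UNIV. coords x $ l * homog \<alpha> $ l) = x"
  using someI_ex[OF assms[unfolded rat_span_homog]] unfolding coords_def by auto

lemma coords_eqI:
  assumes "\<forall>l. w$l \<in> \<rat>" "(\<Sum>l\<in>UNIV. w$l * homog \<alpha> $ l) = x"
  shows "coords x = w"
proof -
  have x: "x \<in> rat_span \<alpha>" using assms unfolding rat_span_homog by blast
  have "(\<Sum>l\<in>UNIV. (coords x - w)$l * homog \<alpha> $ l) = 0"
    using coords(2)[OF x] assms(2) by (simp add: left_diff_distrib sum_subtractf)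
  then have "coords x - w = 0"
    using coords(1)[OF x] assms(1) by (intro rat_lin_indep_1_homog[OF lin_indep]) auto
  then show ?thesis by simp
qed

text \<open>\<open>det (mult_matrix x)\<close> is the field norm of \<open>x\<close>.\<close>

definition mult_matrix :: "real \<Rightarrow> real^('n option)^('n option)" where
  "mult_matrix x = (\<chi> i. coords (x * homog \<alpha> $ i))"

lemma mult_matrix_Rats: "x \<in> rat_span \<alpha> \<Longrightarrow> mult_matrix x $ i $ l \<in> \<rat>"
  unfolding mult_matrix_def by (simp add: coords rat_span_mult homog_in_rat_span)

lemma mult_matrix_homog: "x \<in> rat_span \<alpha> \<Longrightarrow> mult_matrix x *v homog \<alpha> = x *\<^sub>R homog \<alpha>"
  by (simp add: vec_eq_iff matrix_vector_mult_def mult_matrix_def coords rat_span_mult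
      homog_in_rat_span)

lemma det_mult_matrix_nonzero:
  assumes x: "x \<in> rat_span \<alpha>" "x \<noteq> 0"
  shows "det (mult_matrix x) \<noteq> 0"
proof -
  have y: "inverse x \<in> rat_span \<alpha>" using rat_span_inverse[OF x] .
  let ?M = "mult_matrix x ** mult_matrix (inverse x)"
  have "?M *v homog \<alpha> = homog \<alpha>"
    using x by (simp add: matrix_vector_mul_assoc[symmetric] mult_matrix_homog[OF y]
        matrix_vector_mult_scaleR mult_matrix_homog)
  then have row: "(\<Sum>l\<in>UNIV. ?M $ i $ l * homog \<alpha> $ l) = homog \<alpha> $ i" for i
    unfolding matrix_vector_mult_def vec_eq_iff by simp
  have "?M $ i = mat 1 $ i" for i
  proof -
    have "(\<Sum>l\<in>UNIV. mat 1 $ i $ l * homog \<alpha> $ l) = homog \<alpha> $ i"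
      by (simp add: mat_def if_distrib[where f="\<lambda>x. x * _"] sum.delta cong: if_cong)
    then have "(\<Sum>l\<in>UNIV. (?M $ i - mat 1 $ i) $ l * homog \<alpha> $ l) = 0"
      using row[of i] by (simp add: left_diff_distrib sum_subtractf)
    moreover have "\<forall>l. (?M $ i - mat 1 $ i) $ l \<in> \<rat>"
      using x y by (auto simp: matrix_matrix_mult_def mat_def mult_matrix_Rats
          intro!: Rats_sum Rats_mult Rats_diff)
    ultimately have "?M $ i - mat 1 $ i = 0"
      using rat_lin_indep_1_homog[OF lin_indep] by blast
    then show ?thesis by simp
  qed
  then have "?M = mat 1" by (simp add: vec_eq_iff)
  then have "det (mult_matrix x) * det (mult_matrix (inverse x)) = 1"
    using det_mul[of "mult_matrix x" "mult_matrix (inverse x)"] by simp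
  then show ?thesis by auto
qed

lemma mult_matrix_lin_comb:
  assumes "c0 \<in> \<rat>" "\<forall>j. c j \<in> \<rat>"
  shows "mult_matrix (c0 + (\<Sum>j\<in>UNIV. c j * \<alpha>$j)) $ i $ l =
           c0 * mat 1 $ i $ l + (\<Sum>j\<in>UNIV. c j * mult_matrix (\<alpha>$j) $ i $ l)"
proof -
  let ?x = "c0 + (\<Sum>j\<in>UNIV. c j * \<alpha>$j)"
  let ?w = "c0 *\<^sub>R mat 1 $ i + (\<Sum>j\<in>UNIV. c j *\<^sub>R mult_matrix (\<alpha>$j) $ i)"
  note \<alpha> = alpha_in_rat_span
  have B: "(\<Sum>l\<in>UNIV. mult_matrix (\<alpha>$j) $ i $ l * homog \<alpha> $ l) = \<alpha>$j * homog \<alpha> $ i" for j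
    using mult_matrix_homog[OF \<alpha>, of j] unfolding matrix_vector_mult_def vec_eq_iff by simp
  have "(\<Sum>l\<in>UNIV. ?w $ l * homog \<alpha> $ l) =
      (\<Sum>l\<in>UNIV. c0 * (mat 1 $ i $ l * homog \<alpha> $ l))
      + (\<Sum>l\<in>UNIV. \<Sum>j\<in>UNIV. c j * (mult_matrix (\<alpha>$j) $ i $ l * homog \<alpha> $ l))"
    by (simp add: distrib_right sum.distrib sum_distrib_right mult.assoc)
  also have "(\<Sum>l\<in>UNIV. \<Sum>j\<in>UNIV. c j * (mult_matrix (\<alpha>$j) $ i $ l * homog \<alpha> $ l)) =
      (\<Sum>j\<in>UNIV. c j * (\<Sum>l\<in>UNIV. mult_matrix (\<alpha>$j) $ i $ l * homog \<alpha> $ l))"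
    by (subst sum.swap) (simp add: sum_distrib_left)
  also have "(\<Sum>l\<in>UNIV. c0 * (mat 1 $ i $ l * homog \<alpha> $ l)) = c0 * homog \<alpha> $ i"
    by (simp add: mat_def if_distrib[where f="\<lambda>x. c0 * (x * _)"] sum.delta cong: if_cong)
  also have "c0 * homog \<alpha> $ i + (\<Sum>j\<in>UNIV. c j * (\<Sum>l\<in>UNIV. mult_matrix (\<alpha>$j) $ i $ l * homog \<alpha> $ l))
      = ?x * homog \<alpha> $ i"
    by (simp add: B distrib_right sum_distrib_right mult.assoc)
  finally have "coords (?x * homog \<alpha> $ i) = ?w"
    using assms \<alpha> by (intro coords_eqI) (auto simp: mat_def mult_matrix_Rats intro!: Rats_add Rats_mult Rats_sum)
  then show ?thesis by (simp add: mult_matrix_def)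
qed

abbreviation int_lin_form :: "int \<Rightarrow> ('n \<Rightarrow> int) \<Rightarrow> real" where
  "int_lin_form t h \<equiv> of_int t + (\<Sum>j\<in>UNIV. of_int (h j) * \<alpha>$j)"

lemma int_lin_form_in_rat_span: "int_lin_form t h \<in> rat_span \<alpha>"
  unfolding rat_span_def by (intro CollectI exI[of _ "of_int t"] exI[of _ "\<chi> j. of_int (h j)"]) simp

lemma int_lin_form_nonzero:
  assumes "\<exists>j. h j \<noteq> 0"
  shows "int_lin_form t h \<noteq> 0"
proof
  assume "int_lin_form t h = 0"
  then have "of_int t + (\<Sum>j\<in>UNIV. (\<chi> j. of_int (h j))$j * \<alpha>$j) = 0" by simp
  moreover have "of_int t \<in> \<rat>" "\<forall>j. (\<chi> j. real_of_int (h j))$j \<in> \<rat>" by auto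
  ultimately have "\<forall>j. (\<chi> j. real_of_int (h j))$j = 0"
    using lin_indep unfolding rat_lin_indep_1_def by blast
  then show False using assms by auto
qed

lemma mult_matrix_int_lin_form:
  "mult_matrix (int_lin_form t h) $ i $ l =
     of_int t * mat 1 $ i $ l + (\<Sum>j\<in>UNIV. of_int (h j) * mult_matrix (\<alpha>$j) $ i $ l)"
  using mult_matrix_lin_comb[of "of_int t" "\<lambda>j. of_int (h j)"] by simp

lemma mult_matrix_int_lin_form_denominator:
  obtains D :: int where "D > 0" "\<And>t h i l. of_int D * mult_matrix (int_lin_form t h) $ i $ l \<in> \<int>"
proof -
  let ?entries = "range (\<lambda>(j, i, l). mult_matrix (\<alpha>$j) $ i $ l)"
  have "finite ?entries" "?entries \<subseteq> \<rat>"
    using mult_matrix_Rats[OF alpha_in_rat_span] by auto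
  then obtain D :: int where D: "D > 0" "\<forall>q\<in>?entries. of_int D * q \<in> \<int>"
    using finite_Rats_common_denominator by blast
  have DB: "of_int D * mult_matrix (\<alpha>$j) $ i $ l \<in> \<int>" for j i l
    using D(2) by auto
  have "of_int D * mult_matrix (int_lin_form t h) $ i $ l \<in> \<int>" for t h i l
  proof -
    have "of_int D * mult_matrix (int_lin_form t h) $ i $ l =
        of_int t * (of_int D * mat 1 $ i $ l)
        + (\<Sum>j\<in>UNIV. of_int (h j) * (of_int D * mult_matrix (\<alpha>$j) $ i $ l))"
      unfolding mult_matrix_int_lin_form distrib_left sum_distrib_left by (simp add: mult.left_commute)
    also have "\<dots> \<in> \<int>"
    proof (rule Ints_add)
      show "of_int t * (of_int D * mat 1 $ i $ l) \<in> \<int>" by (simp add: mat_def)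
      show "(\<Sum>j\<in>UNIV. of_int (h j) * (of_int D * mult_matrix (\<alpha>$j) $ i $ l)) \<in> \<int>"
        by (rule Ints_sum, rule Ints_mult, rule Ints_of_int, rule DB)
    qed
    finally show ?thesis .
  qed
  then show ?thesis using D(1) that by blast
qed

text \<open>The norm of a nonzero \<open>t + h \<bullet> \<alpha>\<close> is a nonzero rational with bounded denominator.\<close>

lemma abs_det_mult_matrix_lower_bound:
  obtains c where "c > 0"
    "\<And>t h. int_lin_form t h \<noteq> 0 \<Longrightarrow> c \<le> \<bar>det (mult_matrix (int_lin_form t h))\<bar>"
proof -
  obtain D :: int where D: "D > 0" "\<And>t h i l. of_int D * mult_matrix (int_lin_form t h) $ i $ l \<in> \<int>"
    using mult_matrix_int_lin_form_denominator by blast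
  have "1 / of_int D ^ CARD('n option) \<le> \<bar>det (mult_matrix (int_lin_form t h))\<bar>"
    if "int_lin_form t h \<noteq> 0" for t h
  proof -
    have "of_int D ^ CARD('n option) * det (mult_matrix (int_lin_form t h)) \<in> \<int>"
      using D(2) by (rule Ints_det_scaled)
    moreover have "of_int D ^ CARD('n option) * det (mult_matrix (int_lin_form t h)) \<noteq> 0"
      using det_mult_matrix_nonzero[OF int_lin_form_in_rat_span that] D(1) by simp
    ultimately have "1 \<le> \<bar>of_int D ^ CARD('n option) * det (mult_matrix (int_lin_form t h))\<bar>"
      by (rule Ints_nonzero_abs_ge1)
    then show ?thesis using D(1) by (simp add: abs_mult divide_le_eq mult.commute)
  qed
  moreover have "1 / of_int D ^ CARD('n option) > (0::real)" using D(1) by simp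
  ultimately show ?thesis using that by blast
qed

lemma abs_mult_matrix_int_lin_form_le:
  obtains B where "\<And>l. \<bar>homog \<alpha> $ l\<bar> \<le> B"
    "\<And>t h H i l. 1 \<le> H \<Longrightarrow> (\<And>j. \<bar>of_int (h j)\<bar> \<le> H) \<Longrightarrow> \<bar>int_lin_form t h\<bar> \<le> 1 \<Longrightarrow>
       \<bar>mult_matrix (int_lin_form t h) $ i $ l\<bar> \<le> H * B"
proof -
  define S where "S = (\<Sum>j\<in>UNIV. \<bar>\<alpha>$j\<bar>)"
  define B0 where "B0 = (\<Sum>i\<in>UNIV. \<Sum>l\<in>UNIV. \<Sum>j\<in>UNIV. \<bar>mult_matrix (\<alpha>$j) $ i $ l\<bar>)"
  have S: "0 \<le> S" "\<bar>\<alpha>$j\<bar> \<le> S" for j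
    unfolding S_def by (auto intro: member_le_sum sum_nonneg)
  have B0: "0 \<le> B0" unfolding B0_def by (simp add: sum_nonneg)
  have "\<bar>mult_matrix (int_lin_form t h) $ i $ l\<bar> \<le> H * (1 + S + B0)"
    if H: "1 \<le> H" and h: "\<And>j. \<bar>of_int (h j)\<bar> \<le> H" and x: "\<bar>int_lin_form t h\<bar> \<le> 1" for t h H i l
  proof -
    have "\<bar>\<Sum>j\<in>UNIV. of_int (h j) * \<alpha>$j\<bar> \<le> H * S"
      using order.trans[OF sum_abs sum_mono[of UNIV "\<lambda>j. \<bar>of_int (h j) * \<alpha>$j\<bar>" "\<lambda>j. H * \<bar>\<alpha>$j\<bar>"]]
      by (simp add: S_def abs_mult sum_distrib_left mult_right_mono h)
    then have t: "\<bar>of_int t\<bar> \<le> H * (1 + S)"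
      using x H abs_triangle_ineq4[of "int_lin_form t h" "\<Sum>j\<in>UNIV. of_int (h j) * \<alpha>$j"]
      by (simp add: algebra_simps)
    have "\<bar>mult_matrix (int_lin_form t h) $ i $ l\<bar>
        \<le> \<bar>of_int t\<bar> + (\<Sum>j\<in>UNIV. \<bar>of_int (h j)\<bar> * \<bar>mult_matrix (\<alpha>$j) $ i $ l\<bar>)"
      unfolding mult_matrix_int_lin_form
      by (rule order.trans[OF abs_triangle_ineq add_mono])
        (simp_all add: mat_def order.trans[OF sum_abs] abs_mult)
    also have "\<dots> \<le> \<bar>of_int t\<bar> + H * (\<Sum>j\<in>UNIV. \<bar>mult_matrix (\<alpha>$j) $ i $ l\<bar>)"
      by (auto simp: sum_distrib_left intro!: sum_mono mult_right_mono h)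
    also have "(\<Sum>j\<in>UNIV. \<bar>mult_matrix (\<alpha>$j) $ i $ l\<bar>) \<le> B0"
      unfolding B0_def
      by (rule order.trans[OF member_le_sum[of l] member_le_sum[of i]]) (auto intro: sum_nonneg)
    finally show ?thesis using t H by (simp add: algebra_simps mult_left_mono)
  qed
  moreover have "\<bar>homog \<alpha> $ l\<bar> \<le> 1 + S + B0" for l
  proof (cases l)
    case None
    then show ?thesis using S(1) B0 by simp
  next
    case (Some j)
    then show ?thesis using S(2)[of j] B0 by simp
  qed
  ultimately show ?thesis using that by blast
qed

text \<open>Cramer's rule turns \<open>x\<close> into a factor of its norm; the cofactor is \<open>O(H\<^sup>d)\<close>.\<close>

lemma abs_det_mult_matrix_upper_bound:
  obtains K where
    "\<And>t h H. 1 \<le> H \<Longrightarrow> (\<And>j. \<bar>of_int (h j)\<bar> \<le> H) \<Longrightarrow> \<bar>int_lin_form t h\<bar> \<le> 1 \<Longrightarrow>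
       \<bar>det (mult_matrix (int_lin_form t h))\<bar> \<le> K * \<bar>int_lin_form t h\<bar> * H ^ CARD('n)"
proof -
  obtain B where B: "\<And>l. \<bar>homog \<alpha> $ l\<bar> \<le> B"
    "\<And>t h H i l. 1 \<le> H \<Longrightarrow> (\<And>j. \<bar>of_int (h j)\<bar> \<le> H) \<Longrightarrow> \<bar>int_lin_form t h\<bar> \<le> 1 \<Longrightarrow>
       \<bar>mult_matrix (int_lin_form t h) $ i $ l\<bar> \<le> H * B"
    using abs_mult_matrix_int_lin_form_le by blast
  have "\<bar>det (mult_matrix (int_lin_form t h))\<bar>
      \<le> (fact (Suc CARD('n)) * B ^ Suc CARD('n)) * \<bar>int_lin_form t h\<bar> * H ^ CARD('n)"
    if H: "1 \<le> H" and h: "\<And>j. \<bar>of_int (h j)\<bar> \<le> H" and x: "\<bar>int_lin_form t h\<bar> \<le> 1" for t h H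
  proof -
    let ?x = "int_lin_form t h" and ?A = "mult_matrix (int_lin_form t h)"
    let ?Q = "(\<chi> i. if i = None then homog \<alpha> else column i ?A) :: real^('n option)^('n option)"
    have det_A: "det ?A = ?x * det ?Q"
      by (rule det_eq_eigenvalue_mult) (simp_all add: mult_matrix_homog int_lin_form_in_rat_span)
    have "\<bar>?Q $ i $ l\<bar> \<le> (if i = None then B else H * B)" for i l
      using B(1)[of l] B(2)[OF H h x] by (simp add: column_def)
    then have "\<bar>det ?Q\<bar> \<le> fact CARD('n option) *
        (\<Prod>i\<in>(UNIV::'n option set). if i = None then B else H * B)"
      by (rule abs_det_le_prod_row_bounds)
    then have Q: "\<bar>det ?Q\<bar> \<le> fact (Suc CARD('n)) * B ^ Suc CARD('n) * H ^ CARD('n)"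
      by (simp add: prod_UNIV_option power_mult_distrib mult_ac)
    have "\<bar>det ?A\<bar> = \<bar>?x\<bar> * \<bar>det ?Q\<bar>" using det_A by (simp add: abs_mult)
    also have "\<dots> \<le> \<bar>?x\<bar> * (fact (Suc CARD('n)) * B ^ Suc CARD('n) * H ^ CARD('n))"
      using Q by (rule mult_left_mono) simp
    finally show ?thesis by (simp only: mult_ac)
  qed
  then show ?thesis using that by blast
qed

theorem int_lin_form_lower_bound:
  obtains c where "c > 0"
    "\<And>t h H. 1 \<le> H \<Longrightarrow> (\<And>j. \<bar>of_int (h j)\<bar> \<le> H) \<Longrightarrow> \<exists>j. h j \<noteq> 0 \<Longrightarrow>
       c / H ^ CARD('n) \<le> \<bar>int_lin_form t h\<bar>"
proof -
  obtain c1 where c1: "c1 > 0"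
    "\<And>t h. int_lin_form t h \<noteq> 0 \<Longrightarrow> c1 \<le> \<bar>det (mult_matrix (int_lin_form t h))\<bar>"
    using abs_det_mult_matrix_lower_bound by blast
  obtain K where K:
    "\<And>t h H. 1 \<le> H \<Longrightarrow> (\<And>j. \<bar>of_int (h j)\<bar> \<le> H) \<Longrightarrow> \<bar>int_lin_form t h\<bar> \<le> 1 \<Longrightarrow>
       \<bar>det (mult_matrix (int_lin_form t h))\<bar> \<le> K * \<bar>int_lin_form t h\<bar> * H ^ CARD('n)"
    using abs_det_mult_matrix_upper_bound by blast
  define c where "c = min 1 (c1 / max K 1)"
  have "c / H ^ CARD('n) \<le> \<bar>int_lin_form t h\<bar>"
    if H: "1 \<le> H" and h: "\<And>j. \<bar>of_int (h j)\<bar> \<le> H" and nz: "\<exists>j. h j \<noteq> 0" for t h H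
  proof (cases "\<bar>int_lin_form t h\<bar> \<le> 1")
    case True
    have "c1 \<le> K * \<bar>int_lin_form t h\<bar> * H ^ CARD('n)"
      using c1(2)[OF int_lin_form_nonzero[OF nz, of t]] K[OF H h True] by linarith
    also have "\<dots> \<le> max K 1 * (\<bar>int_lin_form t h\<bar> * H ^ CARD('n))"
      using H by (simp add: mult.assoc mult_right_mono)
    finally have "c1 \<le> (\<bar>int_lin_form t h\<bar> * H ^ CARD('n)) * max K 1"
      by (simp only: mult.commute)
    then have "c1 / max K 1 \<le> \<bar>int_lin_form t h\<bar> * H ^ CARD('n)"
      by (simp only: pos_divide_le_eq[of "max K 1"] max.strict_coboundedI2 zero_less_one)
    then have "c \<le> \<bar>int_lin_form t h\<bar> * H ^ CARD('n)" unfolding c_def by linarith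
    then show ?thesis using H by (simp add: divide_le_eq)
  next
    case False
    have "c / H ^ CARD('n) \<le> 1 / H ^ CARD('n)"
      using H by (intro divide_right_mono) (auto simp: c_def)
    also have "\<dots> \<le> 1" using H by simp
    finally show ?thesis using False by linarith
  qed
  moreover have "c > 0" using c1(1) by (simp add: c_def)
  ultimately show ?thesis using that by blast
qed

end

section \<open>Badly approximable vectors\<close>

lemma exists_nat_root_bracket:
  assumes "N \<ge> 1" "d \<ge> 1"
  obtains H :: nat where "H \<ge> 1" "H ^ d \<le> N" "N < (H + 1) ^ d"
proof -
  define H where "H = (LEAST H::nat. N < (H + 1) ^ d)"
  have "N + 1 \<le> (N + 1) ^ d" using assms(2) by (intro self_le_power) auto
  then have "N < (N + 1) ^ d" by simp
  then have bracket: "N < (H + 1) ^ d" unfolding H_def by (rule LeastI)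
  have H1: "H \<ge> 1" using bracket assms by (cases H) auto
  then have "H - 1 < H" by simp
  then have "\<not> N < (H - 1 + 1) ^ d" unfolding H_def by (rule not_less_Least)
  then show ?thesis using that H1 bracket by simp
qed

lemma exists_int_relation_mod:
  fixes z :: "'n::finite \<Rightarrow> int"
  assumes "N \<ge> 1" "N < (H + 1) ^ CARD('n)"
  obtains g where "\<exists>j. g j \<noteq> 0" "\<And>j. \<bar>g j\<bar> \<le> int H" "int N dvd (\<Sum>j\<in>UNIV. g j * z j)"
proof -
  define Dom where "Dom = PiE (UNIV::'n set) (\<lambda>_. {0..int H})"
  define f where "f h = (\<Sum>j\<in>UNIV. h j * z j) mod int N" for h :: "'n \<Rightarrow> int"
  have "nat (int H + 1) = Suc H" by simp
  then have "card Dom = (H + 1) ^ CARD('n)"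
    unfolding Dom_def by (simp add: card_PiE)
  moreover have "f ` Dom \<subseteq> {0..<int N}" unfolding f_def using assms(1) by auto
  ultimately have "\<not> inj_on f Dom"
    using card_inj_on_le[of f Dom "{0..<int N}"] assms(2) by fastforce
  then obtain h1 h2 where h: "h1 \<in> Dom" "h2 \<in> Dom" "h1 \<noteq> h2" "f h1 = f h2"
    unfolding inj_on_def by blast
  define g where "g j = h1 j - h2 j" for j
  have "\<exists>j. g j \<noteq> 0" using h(3) unfolding g_def by (auto simp: fun_eq_iff)
  moreover have "\<bar>g j\<bar> \<le> int H" for j
  proof -
    have "h1 j \<in> {0..int H}" "h2 j \<in> {0..int H}" using h(1,2) unfolding Dom_def by auto
    then show ?thesis unfolding g_def by auto
  qed
  moreover have "int N dvd (\<Sum>j\<in>UNIV. g j * z j)"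
    using h(4) unfolding f_def g_def
    by (simp add: mod_eq_dvd_iff left_diff_distrib sum_subtractf)
  ultimately show ?thesis using that by blast
qed

lemma exists_small_int_lin_form:
  fixes \<alpha> :: "real^'n::finite"
  assumes "N \<ge> 1"
  obtains H :: nat and g :: "'n \<Rightarrow> int" and t :: int where "H \<ge> 1" "H ^ CARD('n) \<le> N" "\<exists>j. g j \<noteq> 0"
    "\<And>j. \<bar>real_of_int (g j)\<bar> \<le> real H"
    "real N * \<bar>of_int t + (\<Sum>j\<in>UNIV. of_int (g j) * \<alpha>$j)\<bar> \<le> real CARD('n) * real H * approx_error \<alpha> N"
proof -
  define z where "z j = round (real N * \<alpha>$j)" for j
  have z: "\<bar>real N * \<alpha>$j - of_int (z j)\<bar> \<le> approx_error \<alpha> N" for j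
    using int_dist_le_approx_error[of N \<alpha> j] unfolding z_def int_dist_eq_round by simp
  obtain H where H: "H \<ge> 1" "H ^ CARD('n) \<le> N" "N < (H + 1) ^ CARD('n)"
    using exists_nat_root_bracket[OF assms, of "CARD('n)"] by auto
  obtain g where g: "\<exists>j. g j \<noteq> 0" "\<And>j. \<bar>g j\<bar> \<le> int H" "int N dvd (\<Sum>j\<in>UNIV. g j * z j)"
    using exists_int_relation_mod[OF assms H(3)] by blast
  from g(3) obtain u where u: "(\<Sum>j\<in>UNIV. g j * z j) = int N * u" by (elim dvdE)
  have gH: "\<bar>real_of_int (g j)\<bar> \<le> real H" for j using g(2)[of j] by linarith
  let ?x = "of_int (- u) + (\<Sum>j\<in>UNIV. of_int (g j) * \<alpha>$j)"
  have "real N * \<bar>?x\<bar> = \<bar>real N * ?x\<bar>" by (simp add: abs_mult)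
  also have "\<bar>real N * ?x\<bar> = \<bar>\<Sum>j\<in>UNIV. of_int (g j) * (real N * \<alpha>$j - of_int (z j))\<bar>"
    using arg_cong[OF u, of real_of_int]
    by (simp add: algebra_simps sum_distrib_left sum_subtractf)
  also have "\<dots> \<le> (\<Sum>j\<in>UNIV. \<bar>of_int (g j) * (real N * \<alpha>$j - of_int (z j))\<bar>)"
    by (rule sum_abs)
  also have "\<dots> \<le> (\<Sum>j\<in>(UNIV::'n set). real H * approx_error \<alpha> N)"
    by (intro sum_mono) (simp add: abs_mult mult_mono gH z)
  finally have "real N * \<bar>?x\<bar> \<le> real CARD('n) * real H * approx_error \<alpha> N" by simp
  then show ?thesis by (rule that[OF H(1,2) g(1) gH])
qed

lemma power_bound_from_small_lin_form:
  fixes c x \<delta> :: real and H N d :: nat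
  assumes "c > 0" "d \<ge> 1" "N \<ge> 1" "H ^ d \<le> N" "\<delta> \<ge> 0"
    and "c \<le> x * real H ^ d" "real N * x \<le> real d * real H * \<delta>"
  shows "(c / real d) ^ d \<le> real N * \<delta> ^ d"
proof -
  have "c * real N \<le> (x * real H ^ d) * real N" using assms(6) by (rule mult_right_mono) simp
  also have "\<dots> = (real N * x) * real H ^ d" by (simp only: mult_ac)
  also have "\<dots> \<le> (real d * real H * \<delta>) * real H ^ d" using assms(7) by (rule mult_right_mono) simp
  finally have "c * real N \<le> real d * real H ^ Suc d * \<delta>" by (simp add: mult_ac)
  then have "(c * real N) ^ d \<le> (real d * real H ^ Suc d * \<delta>) ^ d"
    using assms(1) by (intro power_mono) auto
  also have "\<dots> = real d ^ d * (real H ^ d) ^ Suc d * \<delta> ^ d"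
    by (simp add: power_mult_distrib power_mult[symmetric] mult.commute)
  also have "\<dots> \<le> real d ^ d * real N ^ Suc d * \<delta> ^ d"
    using assms(4,5) by (intro mult_right_mono mult_left_mono power_mono) (auto simp flip: of_nat_power)
  finally have "c ^ d * real N ^ d \<le> real d ^ d * real N ^ Suc d * \<delta> ^ d"
    by (simp add: power_mult_distrib)
  then have "c ^ d \<le> real d ^ d * (real N * \<delta> ^ d)" using assms(3) by (simp add: algebra_simps)
  then show ?thesis using assms(2) by (simp add: power_divide divide_le_eq mult.commute)
qed

context number_field_basis
begin

theorem badly_approximable:
  obtains c where "c > 0" "\<And>N. N \<ge> 1 \<Longrightarrow> c \<le> real N * approx_error \<alpha> N ^ CARD('n)"
proof -
  obtain c1 where c1: "c1 > 0"
    "\<And>t h H. 1 \<le> H \<Longrightarrow> (\<And>j. \<bar>of_int (h j)\<bar> \<le> H) \<Longrightarrow> \<exists>j. h j \<noteq> 0 \<Longrightarrow>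
       c1 / H ^ CARD('n) \<le> \<bar>int_lin_form t h\<bar>"
    using int_lin_form_lower_bound by blast
  have "(c1 / real CARD('n)) ^ CARD('n) \<le> real N * approx_error \<alpha> N ^ CARD('n)" if N: "N \<ge> 1" for N
  proof -
    obtain H g t where H: "H \<ge> 1" "H ^ CARD('n) \<le> N" and g: "\<exists>j. g j \<noteq> 0"
      "\<And>j. \<bar>real_of_int (g j)\<bar> \<le> real H"
      "real N * \<bar>int_lin_form t g\<bar> \<le> real CARD('n) * real H * approx_error \<alpha> N"
      by (rule exists_small_int_lin_form[where \<alpha> = \<alpha>, OF N]) blast
    have "c1 \<le> \<bar>int_lin_form t g\<bar> * real H ^ CARD('n)"
      using c1(2)[of "real H" g t] H(1) g(1,2) by (simp add: divide_le_eq)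
    then show ?thesis
      using c1(1) N H(2) g(3) torus_norm_nonneg[of "of_nat N *\<^sub>R \<alpha>"]
      by (intro power_bound_from_small_lin_form) (auto simp: Suc_leI)
  qed
  moreover have "(c1 / real CARD('n)) ^ CARD('n) > 0" using c1(1) by simp
  ultimately show ?thesis using that by blast
qed

end

section \<open>Rank-1 lattices\<close>

definition rank1_Lambda :: "nat \<Rightarrow> int^'n::finite \<Rightarrow> (real^'n) set" where
  "rank1_Lambda N z = {v. \<exists>k::int. \<forall>j. v$j - of_int k * of_int (z$j) / real N \<in> \<int>}"

lemma rank1_Lambda_zero: "0 \<in> rank1_Lambda N z"
  unfolding rank1_Lambda_def by (intro CollectI exI[of _ 0]) simp

lemma rank1_Lambda_add:
  assumes "u \<in> rank1_Lambda N z" "v \<in> rank1_Lambda N z"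
  shows "u + v \<in> rank1_Lambda N z"
proof -
  obtain k k' where k: "\<forall>j. u$j - of_int k * of_int (z$j) / real N \<in> \<int>"
    and k': "\<forall>j. v$j - of_int k' * of_int (z$j) / real N \<in> \<int>"
    using assms unfolding rank1_Lambda_def by blast
  have "(u + v)$j - of_int (k + k') * of_int (z$j) / real N =
      (u$j - of_int k * of_int (z$j) / real N) + (v$j - of_int k' * of_int (z$j) / real N)" for j
    by (simp add: algebra_simps add_divide_distrib)
  then have "\<forall>j. (u + v)$j - of_int (k + k') * of_int (z$j) / real N \<in> \<int>"
    using k k' by (metis Ints_add)
  then show ?thesis unfolding rank1_Lambda_def by blast
qed

lemma rank1_Lambda_minus:
  assumes "v \<in> rank1_Lambda N z"
  shows "- v \<in> rank1_Lambda N z"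
proof -
  obtain k where k: "\<forall>j. v$j - of_int k * of_int (z$j) / real N \<in> \<int>"
    using assms unfolding rank1_Lambda_def by blast
  have "(- v)$j - of_int (- k) * of_int (z$j) / real N = - (v$j - of_int k * of_int (z$j) / real N)" for j
    by simp
  then have "\<forall>j. (- v)$j - of_int (- k) * of_int (z$j) / real N \<in> \<int>"
    using k by (metis Ints_minus)
  then show ?thesis unfolding rank1_Lambda_def by blast
qed

lemma rank1_Lambda_diff:
  "u \<in> rank1_Lambda N z \<Longrightarrow> v \<in> rank1_Lambda N z \<Longrightarrow> u - v \<in> rank1_Lambda N z"
  using rank1_Lambda_add[OF _ rank1_Lambda_minus, of u N z v] by simp

definition rank1_point :: "nat \<Rightarrow> int^'n::finite \<Rightarrow> nat \<Rightarrow> real^'n" where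
  "rank1_point N z n = (\<chi> j. frac (of_nat n * of_int (z$j) / of_nat N))"

lemma rank1_lattice_eq_image: "rank1_lattice N z = rank1_point N z ` {..<N}"
  unfolding rank1_lattice_def rank1_point_def by auto

lemma rank1_point_in_Lambda: "rank1_point N z n \<in> rank1_Lambda N z"
proof -
  have "rank1_point N z n $ j - of_int (int n) * of_int (z$j) / real N =
      - of_int \<lfloor>of_nat n * of_int (z$j) / real N\<rfloor>" for j
    unfolding rank1_point_def frac_def by simp
  then show ?thesis unfolding rank1_Lambda_def by (auto intro!: exI[of _ "int n"])
qed

lemma rank1_point_in_unit_cube: "rank1_point N z n \<in> unit_cube"
  unfolding unit_cube_def rank1_point_def by (auto simp: frac_ge_0 frac_lt_1 less_imp_le)

lemma rank1_lattice_subset_Lambda: "rank1_lattice N z \<subseteq> rank1_Lambda N z"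
  unfolding rank1_lattice_eq_image using rank1_point_in_Lambda by blast

lemma rank1_Lambda_in_unit_cube:
  assumes "N \<ge> 1" "v \<in> rank1_Lambda N z" "\<And>j. 0 \<le> v$j \<and> v$j < 1"
  shows "v \<in> rank1_lattice N z"
proof -
  obtain k where k: "\<forall>j. v$j - of_int k * of_int (z$j) / real N \<in> \<int>"
    using assms(2) unfolding rank1_Lambda_def by blast
  define n where "n = nat (k mod int N)"
  have "0 \<le> k mod int N" "k mod int N < int N" using assms(1) by auto
  then have n: "int n = k mod int N" "n < N" unfolding n_def by linarith+
  obtain q where kq: "k = int N * q + int n" using n(1) by (metis div_mult_mod_eq mult.commute)
  have "frac (of_nat n * of_int (z$j) / of_nat N) = v$j" for j
  proof -
    have "of_nat n * of_int (z$j) / real N - v$j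
        = - (v$j - of_int k * of_int (z$j) / real N) - of_int (q * z$j)"
      using kq assms(1) by (simp add: field_simps)
    then have "of_nat n * of_int (z$j) / real N - v$j \<in> \<int>"
      using k by (metis Ints_diff Ints_minus Ints_of_int)
    then show ?thesis using assms(3) by (simp add: frac_unique_iff)
  qed
  then have "rank1_point N z n = v" unfolding rank1_point_def by (simp add: vec_eq_iff)
  then show ?thesis unfolding rank1_lattice_eq_image using n(2) by blast
qed

lemma rank1_Lambda_centered:
  assumes "N \<ge> 1" "v \<in> rank1_Lambda N z"
  obtains m :: int where "2 * \<bar>m\<bar> \<le> int N" "\<And>j. v$j - of_int m * of_int (z$j) / real N \<in> \<int>"
proof -
  obtain k where k: "\<forall>j. v$j - of_int k * of_int (z$j) / real N \<in> \<int>"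
    using assms(2) unfolding rank1_Lambda_def by blast
  define r where "r = k mod int N"
  have r: "0 \<le> r" "r < int N" using assms(1) unfolding r_def by auto
  define m where "m = (if 2 * r \<le> int N then r else r - int N)"
  have m: "2 * \<bar>m\<bar> \<le> int N" using r unfolding m_def by auto
  obtain q where "k = int N * q + r" unfolding r_def by (metis div_mult_mod_eq mult.commute)
  then have "k = int N * (if 2 * r \<le> int N then q else q + 1) + m"
    unfolding m_def by (simp add: algebra_simps)
  then have "v$j - of_int m * of_int (z$j) / real N
      = (v$j - of_int k * of_int (z$j) / real N) + of_int ((if 2 * r \<le> int N then q else q + 1) * z$j)" for j
    using assms(1) by (simp add: field_simps)
  then have "v$j - of_int m * of_int (z$j) / real N \<in> \<int>" for j
    using k by (metis Ints_add Ints_of_int)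
  then show ?thesis using that m by blast
qed

lemma finite_rank1_lattice: "finite (rank1_lattice N z)"
  unfolding rank1_lattice_eq_image by simp

lemma rank1_lattice_subset_unit_cube: "rank1_lattice N z \<subseteq> unit_cube"
  unfolding rank1_lattice_eq_image using rank1_point_in_unit_cube by blast

lemma zero_in_rank1_lattice:
  assumes "N \<ge> 1"
  shows "0 \<in> rank1_lattice N z"
proof -
  have "rank1_point N z 0 \<in> rank1_lattice N z"
    unfolding rank1_lattice_eq_image using assms by auto
  moreover have "rank1_point N z 0 = 0" unfolding rank1_point_def by (simp add: vec_eq_iff)
  ultimately show ?thesis by simp
qed

section \<open>Lattices of best approximations\<close>

locale best_approx_lattice =
  fixes \<alpha> :: "real^'n::finite" and N :: nat and z :: "int^'n"
  assumes best: "best_approximation \<alpha> N"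
    and error_pos: "approx_error \<alpha> N > 0"
    and z_close: "\<And>j. \<bar>real N * \<alpha>$j - of_int (z$j)\<bar> \<le> approx_error \<alpha> N"
begin

abbreviation \<delta> where "\<delta> \<equiv> approx_error \<alpha> N"

lemma N_ge_1: "N \<ge> 1"
  using best unfolding best_approximation_def by simp

lemma error_lt_int_mult:
  assumes "m \<noteq> 0" "\<bar>m\<bar> < int N"
  shows "\<delta> < torus_norm (of_int m *\<^sub>R \<alpha>)"
proof -
  have "1 \<le> nat \<bar>m\<bar>" "nat \<bar>m\<bar> < N" using assms by auto
  then have "\<delta> < approx_error \<alpha> (nat \<bar>m\<bar>)" using best unfolding best_approximation_def by blast
  then show ?thesis by (simp only: torus_norm_of_int_scaleR)
qed

lemma int_dist_int_mult_le:
  "int_dist (of_int m * \<alpha>$j) \<le> int_dist (of_int m * of_int (z$j) / real N) + \<bar>of_int m\<bar> * \<delta> / real N"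
proof -
  have "of_int m * \<alpha>$j
      = of_int m * of_int (z$j) / real N + of_int m * (real N * \<alpha>$j - of_int (z$j)) / real N"
    using N_ge_1 by (simp add: field_simps)
  then have "int_dist (of_int m * \<alpha>$j) \<le> int_dist (of_int m * of_int (z$j) / real N)
      + \<bar>of_int m * (real N * \<alpha>$j - of_int (z$j)) / real N\<bar>"
    by (metis int_dist_add_le)
  also have "\<bar>of_int m * (real N * \<alpha>$j - of_int (z$j)) / real N\<bar> \<le> \<bar>of_int m\<bar> * \<delta> / real N"
    using z_close N_ge_1 by (simp add: abs_mult divide_right_mono mult_left_mono)
  finally show ?thesis by simp
qed

lemma not_all_Ints_mult:
  assumes "m \<noteq> 0" "\<bar>m\<bar> < int N"
  shows "\<not> (\<forall>j. of_int m * of_int (z$j) / real N \<in> \<int>)"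
proof
  assume Ints: "\<forall>j. of_int m * of_int (z$j) / real N \<in> \<int>"
  have "\<bar>of_int m\<bar> * \<delta> < real N * \<delta>"
    using assms error_pos by (intro mult_strict_right_mono) linarith+
  then have "\<bar>of_int m\<bar> * \<delta> / real N < \<delta>"
    using N_ge_1 by (simp add: divide_less_eq mult.commute)
  then have "int_dist ((of_int m *\<^sub>R \<alpha>)$j) < \<delta>" for j
    using int_dist_int_mult_le[of m j] Ints by (simp add: int_dist_Ints)
  then have "torus_norm (of_int m *\<^sub>R \<alpha>) < \<delta>" by (simp add: torus_norm_less_iff)
  then show False using error_lt_int_mult[OF assms] by simp
qed

lemma inj_on_rank1_point: "inj_on (rank1_point N z) {..<N}"
proof (rule inj_onI, rule ccontr)
  fix n n' assume n: "n \<in> {..<N}" "n' \<in> {..<N}" "rank1_point N z n = rank1_point N z n'" "n \<noteq> n'"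
  have "of_int (int n - int n') * of_int (z$j) / real N \<in> \<int>" for j
  proof -
    have "frac (of_nat n * of_int (z$j) / of_nat N :: real) = frac (of_nat n' * of_int (z$j) / of_nat N)"
      using arg_cong[OF n(3), of "\<lambda>v. v$j"] unfolding rank1_point_def by simp
    then have "frac (of_nat n * of_int (z$j) / real N - of_nat n' * of_int (z$j) / real N) = 0"
      by (rule frac_diff_eq)
    then show ?thesis by (simp add: diff_divide_distrib left_diff_distrib)
  qed
  moreover have "int n - int n' \<noteq> 0" "\<bar>int n - int n'\<bar> < int N" using n by auto
  ultimately show False using not_all_Ints_mult by blast
qed

lemma card_rank1_lattice: "card (rank1_lattice N z) = N"
  unfolding rank1_lattice_eq_image using card_image[OF inj_on_rank1_point] by simp

lemma rank1_admissible: "rank1_admissible N z"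
proof (rule ccontr)
  define g where "g = Gcd (insert (int N) (range (\<lambda>j. z$j)))"
  have gN: "g dvd int N" and "g \<ge> 0" unfolding g_def by (auto intro: Gcd_dvd)
  have gz: "g dvd z$j" for j unfolding g_def by (rule Gcd_dvd) simp
  assume "\<not> rank1_admissible N z"
  then have "g \<noteq> 1" unfolding rank1_admissible_def g_def by simp
  moreover have "g \<noteq> 0" using gN N_ge_1 by auto
  ultimately have g2: "g \<ge> 2" using \<open>g \<ge> 0\<close> by linarith
  obtain M' where M': "int N = g * M'" using gN by (elim dvdE)
  moreover have "int N > 0" using N_ge_1 by simp
  ultimately have "M' \<ge> 1" using g2 by (simp add: zero_less_mult_iff)
  define M where "M = nat M'"
  have NM: "real N = of_int g * real M" using M' \<open>M' \<ge> 1\<close> unfolding M_def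
    by (metis of_int_mult of_int_of_nat_eq of_nat_nat order_trans zero_le_one)
  have "g * M' \<ge> 2 * M'" using g2 \<open>M' \<ge> 1\<close> by (intro mult_right_mono) auto
  then have M1: "1 \<le> M" "M < N" using M' \<open>M' \<ge> 1\<close> unfolding M_def by linarith+
  have "int_dist ((of_nat M *\<^sub>R \<alpha>)$j) < \<delta>" for j
  proof -
    obtain y where y: "z$j = g * y" using gz[of j] by (elim dvdE)
    have "(of_nat M *\<^sub>R \<alpha>)$j = of_int y + (real N * \<alpha>$j - of_int (z$j)) / of_int g"
      using NM y g2 by (simp add: field_simps)
    then have "int_dist ((of_nat M *\<^sub>R \<alpha>)$j) = int_dist ((real N * \<alpha>$j - of_int (z$j)) / of_int g)"
      using int_dist_add_Ints[of "of_int y" "(real N * \<alpha>$j - of_int (z$j)) / of_int g"]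
      by (simp add: add.commute)
    also have "\<dots> \<le> \<bar>(real N * \<alpha>$j - of_int (z$j)) / of_int g\<bar>" by (rule int_dist_le_abs)
    also have "\<dots> \<le> \<delta> / of_int g" using z_close g2 by (simp add: divide_right_mono)
    also have "\<dots> < \<delta>" using g2 error_pos by (simp add: divide_less_eq)
    finally show ?thesis .
  qed
  then have "approx_error \<alpha> M < \<delta>" by (simp add: torus_norm_less_iff)
  then show False using best M1 unfolding best_approximation_def by auto
qed

lemma rank1_Lambda_norm_ge:
  assumes "v \<in> rank1_Lambda N z" "v \<noteq> 0"
  shows "\<delta> / 2 \<le> norm v"
proof -
  obtain m where m: "2 * \<bar>m\<bar> \<le> int N" "\<And>j. v$j - of_int m * of_int (z$j) / real N \<in> \<int>"
    using rank1_Lambda_centered[OF N_ge_1 assms(1)] by blast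
  have "\<exists>j. \<delta> / 2 \<le> \<bar>v$j\<bar>"
  proof (cases "m = 0")
    case True
    obtain j where "v$j \<noteq> 0" using assms(2) by (metis vec_eq_iff zero_index)
    moreover have "v$j \<in> \<int>" using m(2)[of j] True by simp
    ultimately have "1 \<le> \<bar>v$j\<bar>" by (simp add: Ints_nonzero_abs_ge1)
    then show ?thesis using torus_norm_le_half[of "of_nat N *\<^sub>R \<alpha>"] by (intro exI[of _ j]) linarith
  next
    case False
    obtain j where j: "torus_norm (of_int m *\<^sub>R \<alpha>) = int_dist (of_int m * \<alpha>$j)"
      using torus_norm_attained[of "of_int m *\<^sub>R \<alpha>"] by auto
    have "\<bar>m\<bar> < int N" using m(1) False by (cases "m > 0") auto
    then have "\<delta> < int_dist (of_int m * \<alpha>$j)"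
      using error_lt_int_mult[OF False] j by simp
    also have "\<dots> \<le> int_dist (v$j) + \<delta> / 2"
    proof -
      have "int_dist (of_int m * of_int (z$j) / real N) = int_dist (v$j)"
        using int_dist_add_Ints[OF m(2)[of j], of "of_int m * of_int (z$j) / real N"] by simp
      moreover have "\<bar>of_int m\<bar> * \<delta> / real N \<le> \<delta> / 2"
      proof -
        have "2 * \<bar>of_int m\<bar> \<le> real N" using m(1) by linarith
        then have "2 * \<bar>of_int m\<bar> * \<delta> \<le> real N * \<delta>" using error_pos by (simp add: mult_right_mono)
        then show ?thesis using N_ge_1 by (simp add: field_simps)
      qed
      ultimately show ?thesis using int_dist_int_mult_le[of m j] by linarith
    qed
    finally show ?thesis using int_dist_le_abs[of "v$j"] by (intro exI[of _ j]) linarith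
  qed
  then show ?thesis using component_le_norm_cart order_trans by blast
qed

lemma separation_radius_ge:
  assumes "N \<ge> 2"
  shows "\<delta> / 4 \<le> separation_radius (rank1_lattice N z)"
proof -
  let ?P = "rank1_lattice N z"
  let ?S = "{dist x y | x y. x \<in> ?P \<and> y \<in> ?P \<and> x \<noteq> y}"
  have "rank1_point N z 0 \<in> ?P" "rank1_point N z 1 \<in> ?P"
    unfolding rank1_lattice_eq_image using assms by auto
  moreover have "rank1_point N z 0 \<noteq> rank1_point N z 1"
    using inj_on_rank1_point assms unfolding inj_on_def by force
  ultimately have "?S \<noteq> {}" by blast
  moreover have "\<delta> / 2 \<le> s" if s: "s \<in> ?S" for s
  proof -
    obtain x y where xy: "s = dist x y" "x \<in> ?P" "y \<in> ?P" "x \<noteq> y" using s by blast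
    then have "x - y \<in> rank1_Lambda N z"
      using rank1_lattice_subset_Lambda rank1_Lambda_diff by blast
    then show ?thesis using rank1_Lambda_norm_ge xy by (simp add: dist_norm)
  qed
  ultimately have "\<delta> / 2 \<le> Inf ?S" by (intro cInf_greatest)
  then show ?thesis unfolding separation_radius_def by simp
qed

end

section \<open>The covering radius of a best-approximation lattice\<close>

lemma norm_le_CARD_mult:
  fixes x :: "real^'n::finite"
  assumes "\<And>j. \<bar>x$j\<bar> \<le> e"
  shows "norm x \<le> real CARD('n) * e"
proof -
  have "norm x \<le> (\<Sum>j\<in>UNIV. \<bar>x$j\<bar>)" by (rule norm_le_l1_cart)
  also have "\<dots> \<le> (\<Sum>j\<in>(UNIV::'n set). e)" using assms by (intro sum_mono)
  finally show ?thesis by simp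
qed

text \<open>The hypotheses on \<open>x\<close> say that \<open>x\<close> is a deepest hole of \<open>L\<close> up to \<open>r/4\<close>. A nonzero point
  \<open>t x + w\<close> of \<open>L\<close> is shorter than \<open>2r\<close> if \<open>|t| \<parallel>x\<parallel> < r\<close>, and otherwise its multiple by \<open>sgn t\<close>
  lies closer than \<open>D\<close> to \<open>x\<close>.\<close>

lemma tube_around_deep_hole:
  fixes x w l :: "'a::real_normed_vector"
  assumes "r > 0"
    and sep: "\<And>v. v \<in> L \<Longrightarrow> v \<noteq> 0 \<Longrightarrow> 2 * r \<le> norm v"
    and neg: "\<And>v. v \<in> L \<Longrightarrow> - v \<in> L"
    and x: "norm x \<le> D + r / 4" "\<And>v. v \<in> L \<Longrightarrow> D \<le> norm (x - v)"
    and l: "l \<in> L" "l = t *\<^sub>R x + w" "\<bar>t\<bar> \<le> 1" "norm w \<le> r / 2"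
  shows "l = 0"
proof (rule ccontr)
  assume "l \<noteq> 0"
  then have l_norm: "2 * r \<le> norm l" using sep l(1) by blast
  show False
  proof (cases "\<bar>t\<bar> * norm x < r")
    case True
    have "norm l \<le> \<bar>t\<bar> * norm x + norm w" unfolding l(2) using norm_triangle_ineq[of "t *\<^sub>R x" w] by simp
    then show False using True l(4) l_norm \<open>r > 0\<close> by simp
  next
    case False
    define s where "s = sgn t"
    have s: "\<bar>s\<bar> = 1" "s * t = \<bar>t\<bar>" using False \<open>r > 0\<close> unfolding s_def
      by (auto simp: sgn_if)
    have "x - s *\<^sub>R l = (1 - \<bar>t\<bar>) *\<^sub>R x - s *\<^sub>R w"
      unfolding l(2) using s(2) by (simp add: algebra_simps)
    then have "norm (x - s *\<^sub>R l) \<le> (1 - \<bar>t\<bar>) * norm x + norm w"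
      using norm_triangle_ineq4[of "(1 - \<bar>t\<bar>) *\<^sub>R x" "s *\<^sub>R w"] l(3) s(1) by simp
    also have "\<dots> < D" using False x(1) l(4) \<open>r > 0\<close> by (simp add: algebra_simps)
    finally have "norm (x - s *\<^sub>R l) < D" .
    moreover have "s *\<^sub>R l \<in> L" using s(1) l(1) neg by (cases "s = 1") (auto simp: abs_if split: if_splits)
    ultimately show False using x(2) by fastforce
  qed
qed

lemma grid_congruence_Ints:
  fixes a b :: "'n::finite \<Rightarrow> int" and z :: "int^'n" and n n' :: int
  assumes "M \<ge> 1" "N \<ge> 1"
    and "(a j + n * int M * z$j) mod int (M * N) = (b j + n' * int M * z$j) mod int (M * N)"
  shows "of_int (a j - b j) / real (M * N) + of_int (n - n') * of_int (z$j) / real N \<in> \<int>"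
proof -
  have "int (M * N) dvd (a j - b j) + (n - n') * int M * z$j"
    using assms(3) by (simp add: mod_eq_dvd_iff algebra_simps)
  then obtain c where c: "(a j - b j) + (n - n') * int M * z$j = int (M * N) * c" by (elim dvdE)
  have e: "of_int (a j - b j) + of_int (n - n') * real M * of_int (z$j) = real (M * N) * of_int c"
    using arg_cong[OF c, of real_of_int] by simp
  have "of_int (n - n') * of_int (z$j) / real N = of_int (n - n') * real M * of_int (z$j) / real (M * N)"
    using assms(1,2) by (simp add: field_simps)
  then have "of_int (a j - b j) / real (M * N) + of_int (n - n') * of_int (z$j) / real N
      = (of_int (a j - b j) + of_int (n - n') * real M * of_int (z$j)) / real (M * N)"
    by (simp add: add_divide_distrib)
  also have "\<dots> = of_int c" unfolding e using assms(1,2) by simp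
  finally have "of_int (a j - b j) / real (M * N) + of_int (n - n') * of_int (z$j) / real N = of_int c" .
  then show ?thesis by simp
qed

lemma exists_grid_scale:
  assumes "s > 0" "N \<ge> 1"
  obtains M K :: nat where "M \<ge> 1" "K \<ge> 1" "s * real (M * N) / 2 \<le> real K" "real K \<le> s * real (M * N)"
proof -
  define M where "M = nat \<lceil>2 / (s * real N)\<rceil> + 1"
  have "2 / (s * real N) \<le> real M"
    unfolding M_def using ceiling_correct[of "2 / (s * real N)"] by linarith
  then have sG: "2 \<le> s * real (M * N)"
    using assms by (simp add: divide_le_eq mult.commute mult.left_commute)
  define K where "K = nat \<lfloor>s * real (M * N)\<rfloor>"
  have "real K \<le> s * real (M * N)" "s * real (M * N) < real K + 1"
    unfolding K_def using sG floor_correct[of "s * real (M * N)"] by auto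
  then show ?thesis using sG by (intro that[of M K]) (auto simp: M_def)
qed

text \<open>Integer points \<open>\<lfloor>a K x / x\<^sub>j\<^sub>0\<rfloor> + b\<close> approximate the multiples \<open>(a K / x\<^sub>j\<^sub>0) x\<close>; with
  \<open>0 \<le> b < K\<close> they are distinct because their \<open>j\<^sub>0\<close>-th coordinate is \<open>a K + b\<^sub>j\<^sub>0\<close>.\<close>

definition tube_grid_point :: "real^'n::finite \<Rightarrow> 'n \<Rightarrow> nat \<Rightarrow> nat \<Rightarrow> ('n \<Rightarrow> int) \<Rightarrow> 'n \<Rightarrow> int" where
  "tube_grid_point x j0 K a b j = \<lfloor>real a * real K * x$j / x$j0\<rfloor> + b j"

lemma tube_grid_point_approx:
  assumes "x$j0 \<noteq> 0" "G > 0" "b \<in> PiE UNIV (\<lambda>_. {0..<int K})"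
  shows "\<bar>of_int (tube_grid_point x j0 K a b j) / G - real a * real K / (G * x$j0) * x$j\<bar> \<le> real K / G"
proof -
  define y where "y = real a * real K * x$j / x$j0"
  have "0 \<le> b j" "b j < int K" using assms(3) by auto
  then have "\<bar>of_int \<lfloor>y\<rfloor> - y + of_int (b j)\<bar> \<le> real K"
    using floor_correct[of y] by linarith
  moreover have "of_int (tube_grid_point x j0 K a b j) / G - real a * real K / (G * x$j0) * x$j
      = (of_int \<lfloor>y\<rfloor> - y + of_int (b j)) / G"
    using assms(1,2) unfolding tube_grid_point_def y_def by (simp add: field_simps)
  ultimately show ?thesis using assms(2) by (simp add: divide_right_mono)
qed

lemma inj_on_tube_grid_point:
  assumes "x$j0 \<noteq> 0"
  shows "inj_on (\<lambda>(a, b). tube_grid_point x j0 K a b) (UNIV \<times> PiE UNIV (\<lambda>_. {0..<int K}))"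
proof (rule inj_onI, clarify)
  fix a b a' b'
  assume b: "b \<in> PiE UNIV (\<lambda>_. {0..<int K})" "b' \<in> PiE UNIV (\<lambda>_. {0..<int K})"
    and eq: "tube_grid_point x j0 K a b = tube_grid_point x j0 K a' b'"
  have "\<lfloor>real a * real K\<rfloor> = int a * int K" for a by (metis floor_of_nat of_nat_mult)
  then have j0: "tube_grid_point x j0 K a b j0 = int a * int K + b j0" for a b
    using assms unfolding tube_grid_point_def by simp
  have "int a * int K + b j0 = int a' * int K + b' j0"
    using fun_cong[OF eq, of j0] unfolding j0 .
  moreover have "b j0 \<in> {0..<int K}" "b' j0 \<in> {0..<int K}" using b by auto
  moreover have "(int c * int K + r) div int K = int c" if "r \<in> {0..<int K}" for c r
    using that by (simp add: add.commute[of "int c * int K"] div_pos_pos_trivial)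
  ultimately have "int a = int a'" by metis
  then have "a = a'" by simp
  moreover have "b = b'"
    using eq unfolding \<open>a = a'\<close> tube_grid_point_def by (simp add: fun_eq_iff)
  ultimately show "a = a' \<and> b = b'" by simp
qed

lemma tube_grid_point_diff:
  fixes x :: "real^'n::finite"
  assumes "x$j0 \<noteq> 0" "G > 0" "b \<in> PiE UNIV (\<lambda>_. {0..<int K})" "b' \<in> PiE UNIV (\<lambda>_. {0..<int K})"
  obtains t w where
    "(\<chi> j. of_int (tube_grid_point x j0 K a b j - tube_grid_point x j0 K a' b' j) / G) = t *\<^sub>R x + w"
    "\<bar>t\<bar> \<le> real (max a a') * real K / (G * \<bar>x$j0\<bar>)" "norm w \<le> real CARD('n) * (2 * real K / G)"
proof -
  define t where "t a = real a * real K / (G * x$j0)" for a :: nat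
  define w where "w = (\<chi> j. of_int (tube_grid_point x j0 K a b j - tube_grid_point x j0 K a' b' j) / G)
    - (t a - t a') *\<^sub>R x"
  have "t a - t a' = (real a - real a') * real K / (G * x$j0)"
    unfolding t_def by (simp add: diff_divide_distrib left_diff_distrib)
  then have "\<bar>t a - t a'\<bar> = \<bar>real a - real a'\<bar> * real K / (G * \<bar>x$j0\<bar>)"
    using assms(2) by (simp add: abs_mult abs_divide)
  also have "\<dots> \<le> real (max a a') * real K / (G * \<bar>x$j0\<bar>)"
    using assms(1,2) by (intro divide_right_mono mult_right_mono) auto
  finally have "\<bar>t a - t a'\<bar> \<le> real (max a a') * real K / (G * \<bar>x$j0\<bar>)" .
  moreover have "\<bar>w$j\<bar> \<le> 2 * real K / G" for j
  proof -
    have "w$j = (of_int (tube_grid_point x j0 K a b j) / G - t a * x$j)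
        - (of_int (tube_grid_point x j0 K a' b' j) / G - t a' * x$j)"
      unfolding w_def by (simp add: diff_divide_distrib algebra_simps)
    then show ?thesis
      using tube_grid_point_approx[OF assms(1,2,3), of a j] tube_grid_point_approx[OF assms(1,2,4), of a' j]
      unfolding t_def abs_le_iff by linarith
  qed
  then have "norm w \<le> real CARD('n) * (2 * real K / G)" by (rule norm_le_CARD_mult)
  ultimately show ?thesis using that[of "t a - t a'" w] unfolding w_def by simp
qed

lemma tube_count_bound:
  fixes A0 K G N :: nat and s X :: real
  assumes count: "(real A0 + 1) * real K ^ d * real N \<le> real G ^ d" and "d \<ge> 1"
    and A0: "real G * X / (2 * real K) \<le> real A0 + 1"
    and K: "s * real G / 2 \<le> real K" "K \<ge> 1"
    and pos: "G > 0" "s > 0" "X \<ge> 0" "N > 0"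
  shows "X \<le> 2 * (2 / s) ^ (d - 1) / real N"
proof -
  obtain d' where d: "d = Suc d'" using \<open>d \<ge> 1\<close> by (cases d) auto
  have "real G * X / (2 * real K) * real K ^ d * real N \<le> real G ^ d"
    using A0 K(2) pos by (intro order.trans[OF _ count] mult_right_mono) auto
  then have "real G * (X * real K ^ d' * real N) \<le> real G * (2 * real G ^ d')"
    using K(2) unfolding d by (simp add: field_simps)
  then have "X * real K ^ d' * real N \<le> 2 * real G ^ d'" using pos by simp
  moreover have "X * (s * real G / 2) ^ d' * real N \<le> X * real K ^ d' * real N"
    using K pos by (intro mult_right_mono mult_left_mono power_mono) auto
  ultimately have "X * (s / 2) ^ d' * real N * real G ^ d' \<le> 2 * real G ^ d'"
    by (simp add: power_mult_distrib power_divide mult_ac)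
  then have "X * (s / 2) ^ d' * real N \<le> 2" using pos by simp
  then show ?thesis using pos unfolding d by (simp add: field_simps power_divide)
qed

context best_approx_lattice
begin

text \<open>The translates of such grid points by \<open>0, z/N, \<dots>, (N - 1) z/N\<close> are pairwise incongruent
  modulo \<open>\<int>\<^sup>d\<close>, and there are only \<open>(MN)\<^sup>d\<close> classes.\<close>

lemma card_incongruent_grid_points:
  fixes A :: "('n \<Rightarrow> int) set"
  assumes "M \<ge> 1" "finite A"
    and incong: "\<And>a b. a \<in> A \<Longrightarrow> b \<in> A \<Longrightarrow>
      (\<chi> j. of_int (a j - b j) / real (M * N)) \<in> rank1_Lambda N z \<Longrightarrow> a = b"
  shows "card A * N \<le> (M * N) ^ CARD('n)"
proof -
  define G where "G = M * N"
  have G: "G \<ge> 1" using assms(1) N_ge_1 unfolding G_def by simp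
  define \<phi> where "\<phi> = (\<lambda>(a::'n \<Rightarrow> int, n::nat) j. (a j + int n * int M * z$j) mod int G)"
  have "inj_on \<phi> (A \<times> {..<N})"
  proof (rule inj_onI, clarify)
    fix a n b n' assume a: "a \<in> A" "n < N" and b: "b \<in> A" "n' < N" and eq: "\<phi> (a, n) = \<phi> (b, n')"
    have key: "of_int (a j - b j) / real G + of_int (int n - int n') * of_int (z$j) / real N \<in> \<int>" for j
    proof -
      have "(a j + int n * int M * z$j) mod int (M * N) = (b j + int n' * int M * z$j) mod int (M * N)"
        using fun_cong[OF eq, of j] unfolding \<phi>_def G_def by simp
      then show ?thesis unfolding G_def
        by (rule grid_congruence_Ints[where n = "int n" and n' = "int n'", OF assms(1) N_ge_1])
    qed
    have "(\<chi> j. of_int (a j - b j) / real G) $ j - of_int (int n' - int n) * of_int (z$j) / real N \<in> \<int>"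
      for j using key[of j] by (simp add: algebra_simps diff_divide_distrib)
    then have "a = b" using incong[OF a(1) b(1)] unfolding rank1_Lambda_def G_def by blast
    moreover have "n = n'"
    proof (rule ccontr)
      assume "n \<noteq> n'"
      moreover have "\<forall>j. of_int (int n - int n') * of_int (z$j) / real N \<in> \<int>"
        using key \<open>a = b\<close> by simp
      moreover have "\<bar>int n - int n'\<bar> < int N" using a(2) b(2) by (simp add: abs_less_iff)
      ultimately show False using not_all_Ints_mult[of "int n - int n'"] by simp
    qed
    ultimately show "a = b \<and> n = n'" by simp
  qed
  moreover have "\<phi> ` (A \<times> {..<N}) \<subseteq> PiE UNIV (\<lambda>_. {0..<int G})"
    unfolding \<phi>_def using G by auto
  ultimately have "card (A \<times> {..<N}) \<le> card (PiE (UNIV::'n set) (\<lambda>_. {0..<int G}))"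
    by (intro card_inj_on_le) (auto simp: finite_PiE)
  then show ?thesis unfolding G_def by (simp add: card_PiE card_cartesian_product nat_mult_distrib)
qed

lemma tube_grid_points_incongruent:
  assumes x: "norm x \<le> D + \<delta> / 16" "\<And>v. v \<in> rank1_Lambda N z \<Longrightarrow> D \<le> norm (x - v)"
    and j0: "x$j0 \<noteq> 0"
    and MK: "M \<ge> 1" "real K \<le> \<delta> / (16 * real CARD('n)) * real (M * N)"
    and A0: "real A0 * real K \<le> real (M * N) * \<bar>x$j0\<bar> / 2"
    and ab: "a \<le> A0" "a' \<le> A0" "b \<in> PiE UNIV (\<lambda>_. {0..<int K})" "b' \<in> PiE UNIV (\<lambda>_. {0..<int K})"
    and Lambda: "(\<chi> j. of_int (tube_grid_point x j0 K a b j - tube_grid_point x j0 K a' b' j)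
      / real (M * N)) \<in> rank1_Lambda N z"
  shows "tube_grid_point x j0 K a b = tube_grid_point x j0 K a' b'"
proof -
  let ?p = "tube_grid_point x j0 K a b" and ?q = "tube_grid_point x j0 K a' b'"
  define G where "G = M * N"
  have G: "real G > 0" using MK(1) N_ge_1 by (simp add: G_def)
  obtain t w where tw: "(\<chi> j. of_int (?p j - ?q j) / real G) = t *\<^sub>R x + w"
    "\<bar>t\<bar> \<le> real (max a a') * real K / (real G * \<bar>x$j0\<bar>)" "norm w \<le> real CARD('n) * (2 * real K / real G)"
    using tube_grid_point_diff[OF j0 G ab(3,4)] by blast
  have "real (max a a') * real K \<le> real A0 * real K" using ab(1,2) by (simp add: mult_right_mono)
  also have "\<dots> \<le> 1 / 2 * (real G * \<bar>x$j0\<bar>)" using A0 unfolding G_def by simp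
  finally have "real (max a a') * real K / (real G * \<bar>x$j0\<bar>) \<le> 1 / 2"
    using G j0 by (simp add: pos_divide_le_eq)
  then have "\<bar>t\<bar> \<le> 1" using tw(2) by linarith
  moreover have "2 * real K / real G \<le> \<delta> / (8 * real CARD('n))"
    using MK(2) G unfolding G_def by (simp add: field_simps)
  then have "norm w \<le> real CARD('n) * (\<delta> / (8 * real CARD('n)))"
    using tw(3) by (meson mult_left_mono of_nat_0_le_iff order_trans)
  ultimately have "(\<chi> j. of_int (?p j - ?q j) / real G) = (0 :: real^'n)"
    using error_pos rank1_Lambda_norm_ge rank1_Lambda_minus x Lambda tw(1) unfolding G_def
    by (intro tube_around_deep_hole[where r = "\<delta> / 4" and L = "rank1_Lambda N z"]) auto
  then have "of_int (?p j - ?q j) / real G = 0" for j by (metis vec_lambda_beta zero_index)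
  then show ?thesis using G by (auto simp: fun_eq_iff)
qed

lemma card_tube_grid_points_le:
  assumes x: "norm x \<le> D + \<delta> / 16" "\<And>v. v \<in> rank1_Lambda N z \<Longrightarrow> D \<le> norm (x - v)"
    and j0: "x$j0 \<noteq> 0"
    and MK: "M \<ge> 1" "real K \<le> \<delta> / (16 * real CARD('n)) * real (M * N)"
    and A0: "real A0 * real K \<le> real (M * N) * \<bar>x$j0\<bar> / 2"
  shows "(A0 + 1) * K ^ CARD('n) * N \<le> (M * N) ^ CARD('n)"
proof -
  define I where "I = {..A0} \<times> PiE (UNIV::'n set) (\<lambda>_. {0..<int K})"
  define P where "P = (\<lambda>(a, b). tube_grid_point x j0 K a b) ` I"
  have "card P = card I"
    unfolding P_def by (rule card_image, rule inj_on_subset[OF inj_on_tube_grid_point[OF j0]])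
      (auto simp: I_def)
  then have "card P = (A0 + 1) * K ^ CARD('n)"
    by (simp add: I_def card_cartesian_product card_PiE)
  moreover have "card P * N \<le> (M * N) ^ CARD('n)"
  proof (rule card_incongruent_grid_points[OF MK(1)])
    show "finite P" unfolding P_def I_def by (simp add: finite_PiE)
    fix p q assume "p \<in> P" "q \<in> P" and pq: "(\<chi> j. of_int (p j - q j) / real (M * N)) \<in> rank1_Lambda N z"
    then obtain a b a' b' where "a \<le> A0" "b \<in> PiE UNIV (\<lambda>_. {0..<int K})"
      "a' \<le> A0" "b' \<in> PiE UNIV (\<lambda>_. {0..<int K})"
      and "p = tube_grid_point x j0 K a b" "q = tube_grid_point x j0 K a' b'"
      unfolding P_def I_def by auto
    then show "p = q" using tube_grid_points_incongruent[OF x j0 MK A0] pq by blast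
  qed
  ultimately show ?thesis by simp
qed

lemma deep_hole_bound:
  assumes x: "norm x \<le> D + \<delta> / 16" "\<And>v. v \<in> rank1_Lambda N z \<Longrightarrow> D \<le> norm (x - v)"
  shows "D \<le> 2 * real CARD('n) * (32 * real CARD('n) / \<delta>) ^ (CARD('n) - 1) / real N"
proof -
  define d where "d = CARD('n)"
  obtain j0 where j0: "\<And>j. \<bar>x$j\<bar> \<le> \<bar>x$j0\<bar>"
    using Max_in[of "range (\<lambda>j. \<bar>x$j\<bar>)"] Max_ge[of "range (\<lambda>j. \<bar>x$j\<bar>)"] by fastforce
  define X where "X = \<bar>x$j0\<bar>"
  have DX: "D \<le> real d * X"
    using x(2)[OF rank1_Lambda_zero] norm_le_CARD_mult[of x X] j0 unfolding d_def X_def by simp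
  show ?thesis
  proof (cases "X = 0")
    case True
    moreover have "0 \<le> 2 * real d * (32 * real d / \<delta>) ^ (d - 1) / real N" using error_pos by simp
    ultimately show ?thesis using DX unfolding d_def by simp
  next
    case False
    define s where "s = \<delta> / (16 * real d)"
    have s: "s > 0" using error_pos by (simp add: s_def d_def)
    obtain M K where MK: "M \<ge> 1" "K \<ge> 1" "s * real (M * N) / 2 \<le> real K" "real K \<le> s * real (M * N)"
      using exists_grid_scale[OF s N_ge_1] by blast
    define A0 where "A0 = nat \<lfloor>real (M * N) * X / (2 * real K)\<rfloor>"
    have A0: "real A0 \<le> real (M * N) * X / (2 * real K)" "real (M * N) * X / (2 * real K) \<le> real A0 + 1"
      using floor_correct[of "real (M * N) * X / (2 * real K)"] MK(2) by (auto simp: A0_def X_def)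
    have "(A0 + 1) * K ^ d * N \<le> (M * N) ^ d"
      using x False MK(1,4) A0(1) MK(2) unfolding d_def s_def X_def
      by (intro card_tube_grid_points_le) (auto simp: field_simps)
    then have "real ((A0 + 1) * K ^ d * N) \<le> real ((M * N) ^ d)" by (simp only: of_nat_le_iff)
    then have "X \<le> 2 * (2 / s) ^ (d - 1) / real N"
      using A0(2) MK(2,3) s N_ge_1 MK(1) unfolding d_def
      by (intro tube_count_bound[of A0 K _ N "M * N" X s]) (auto simp: X_def algebra_simps)
    then have "D \<le> real d * (2 * (2 / s) ^ (d - 1) / real N)"
      using DX by (meson mult_left_mono order_trans of_nat_0_le_iff)
    also have "2 / s = 32 * real d / \<delta>" using error_pos by (simp add: s_def)
    finally show ?thesis unfolding d_def by (simp add: mult_ac)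
  qed
qed

definition cover_bound :: real where
  "cover_bound = 2 * real CARD('n) * (32 * real CARD('n) / \<delta>) ^ (CARD('n) - 1) / real N + \<delta>"

lemma cover_bound_pos: "cover_bound > 0"
  unfolding cover_bound_def using error_pos by (intro add_nonneg_pos) auto

lemma exists_Lambda_point_near: "\<exists>v\<in>rank1_Lambda N z. norm (y - v) < cover_bound"
proof -
  let ?S = "(\<lambda>v. norm (y - v)) ` rank1_Lambda N z"
  define D where "D = Inf ?S"
  have bdd: "bdd_below ?S" by (rule bdd_belowI[of _ 0]) auto
  obtain v0 where v0: "v0 \<in> rank1_Lambda N z" "norm (y - v0) < D + \<delta> / 16"
    using cInf_lessD[of ?S "D + \<delta> / 16"] rank1_Lambda_zero error_pos unfolding D_def by force
  have "D \<le> norm (y - v0 - v)" if "v \<in> rank1_Lambda N z" for v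
  proof -
    have "norm (y - (v0 + v)) \<in> ?S" using rank1_Lambda_add[OF v0(1) that] by blast
    then show ?thesis unfolding D_def using cInf_lower[OF _ bdd] by (simp add: algebra_simps)
  qed
  then have "D \<le> 2 * real CARD('n) * (32 * real CARD('n) / \<delta>) ^ (CARD('n) - 1) / real N"
    using v0(2) by (intro deep_hole_bound[of "y - v0"]) auto
  then have "norm (y - v0) < cover_bound" using v0(2) error_pos unfolding cover_bound_def by linarith
  then show ?thesis using v0(1) by blast
qed

lemma exists_rank1_point_near_if_small:
  assumes "cover_bound \<le> 1/2" "x \<in> unit_cube"
  shows "\<exists>p\<in>rank1_lattice N z. dist x p \<le> (real CARD('n) + 1) * cover_bound"
proof -
  let ?E = cover_bound
  define y :: "real^'n" where "y = (\<chi> j. max ?E (min (x$j) (1 - ?E)))"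
  have y: "?E \<le> y$j" "y$j \<le> 1 - ?E" "\<bar>x$j - y$j\<bar> \<le> ?E" for j
    using assms cover_bound_pos unfolding y_def unit_cube_def by (auto simp: max_def min_def abs_le_iff)
  obtain v where v: "v \<in> rank1_Lambda N z" "norm (y - v) < ?E"
    using exists_Lambda_point_near by blast
  have yv: "\<bar>y$j - v$j\<bar> < ?E" for j
    using component_le_norm_cart[of "y - v" j] v(2) by simp
  have "0 \<le> v$j \<and> v$j < 1" for j
    using yv[of j] y(1,2)[of j] unfolding abs_less_iff by linarith
  then have "v \<in> rank1_lattice N z" by (rule rank1_Lambda_in_unit_cube[OF N_ge_1 v(1)])
  moreover have "norm (x - y) \<le> real CARD('n) * ?E" using y(3) by (intro norm_le_CARD_mult) simp
  moreover have "dist x v \<le> norm (x - y) + norm (y - v)"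
    unfolding dist_norm using norm_triangle_ineq[of "x - y" "y - v"] by simp
  ultimately show ?thesis using v(2) by (intro bexI[of _ v]) (auto simp: algebra_simps)
qed

lemma exists_rank1_point_near:
  assumes "x \<in> unit_cube"
  shows "\<exists>p\<in>rank1_lattice N z. dist x p \<le> (2 * real CARD('n) + 1) * cover_bound"
proof (cases "cover_bound \<le> 1/2")
  case True
  have "(real CARD('n) + 1) * cover_bound \<le> (2 * real CARD('n) + 1) * cover_bound"
    using cover_bound_pos by (intro mult_right_mono) auto
  then show ?thesis using exists_rank1_point_near_if_small[OF True assms] by force
next
  case False
  have "norm x \<le> real CARD('n) * 1"
    using assms unfolding unit_cube_def by (intro norm_le_CARD_mult) auto
  also have "\<dots> \<le> real CARD('n) * (2 * cover_bound)"
    using False by (intro mult_left_mono) auto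
  also have "\<dots> \<le> (2 * real CARD('n) + 1) * cover_bound"
    using cover_bound_pos by (simp add: algebra_simps)
  finally show ?thesis using zero_in_rank1_lattice[OF N_ge_1] by (intro bexI[of _ 0]) auto
qed

lemma covering_radius_le: "covering_radius (rank1_lattice N z) \<le> (2 * real CARD('n) + 1) * cover_bound"
  unfolding covering_radius_def
proof (rule cSUP_least)
  show "unit_cube \<noteq> {}" unfolding unit_cube_def by (auto intro!: exI[of _ 0])
  fix x :: "real^'n" assume "x \<in> unit_cube"
  then obtain p where p: "p \<in> rank1_lattice N z" "dist x p \<le> (2 * real CARD('n) + 1) * cover_bound"
    using exists_rank1_point_near by blast
  have "(INF y\<in>rank1_lattice N z. dist x y) \<le> dist x p"
    by (rule cINF_lower[OF _ p(1)]) (rule bdd_belowI[of _ 0], auto)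
  then show "(INF y\<in>rank1_lattice N z. dist x y) \<le> (2 * real CARD('n) + 1) * cover_bound"
    using p(2) by linarith
qed

lemma mesh_ratio_le:
  assumes "N \<ge> 2"
  shows "mesh_ratio (rank1_lattice N z) \<le>
    4 * (2 * real CARD('n) + 1) *
      (2 * real CARD('n) * (32 * real CARD('n)) ^ (CARD('n) - 1) / (real N * \<delta> ^ CARD('n)) + 1)"
proof -
  define d where "d = CARD('n)"
  have d: "d = Suc (d - 1)" unfolding d_def by simp
  have q: "\<delta> / 4 \<le> separation_radius (rank1_lattice N z)" by (rule separation_radius_ge[OF assms])
  have "mesh_ratio (rank1_lattice N z) \<le> (2 * real d + 1) * cover_bound / separation_radius (rank1_lattice N z)"
    unfolding mesh_ratio_def d_def using covering_radius_le q error_pos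
    by (intro divide_right_mono) auto
  also have "\<dots> \<le> (2 * real d + 1) * cover_bound / (\<delta> / 4)"
    using q error_pos cover_bound_pos by (intro divide_left_mono) auto
  also have "cover_bound / \<delta> = 2 * real d * (32 * real d) ^ (d - 1) / (real N * \<delta> ^ d) + 1"
    using error_pos N_ge_1 unfolding cover_bound_def d_def[symmetric]
    by (subst d) (simp add: field_simps power_divide)
  then have "(2 * real d + 1) * cover_bound / (\<delta> / 4)
      = 4 * (2 * real d + 1) * (2 * real d * (32 * real d) ^ (d - 1) / (real N * \<delta> ^ d) + 1)"
    using error_pos by (simp add: field_simps)
  finally show ?thesis unfolding d_def .
qed

end

section \<open>Quasi-uniformity of the best-approximation lattices\<close>

context number_field_basis
begin

lemma Nseq_ge_2: "i \<ge> 2 \<Longrightarrow> Nseq \<alpha> i \<ge> 2"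
proof (induction i rule: dec_induct)
  case base
  show ?case using Nseq_strict_mono[of \<alpha> 0] approx_error_pos[OF lin_indep] by (simp add: numeral_2_eq_2)
next
  case (step i)
  then obtain k where "i = Suc k" by (cases i) auto
  then show ?case using Nseq_strict_mono[of \<alpha> k] approx_error_pos[OF lin_indep] step.IH by fastforce
qed

lemma best_approx_lattice_Nseq:
  assumes "i \<ge> 1"
  shows "best_approx_lattice \<alpha> (Nseq \<alpha> i) (zvec \<alpha> i)"
proof
  obtain k where i: "i = Suc k" using assms by (cases i) auto
  show "best_approximation \<alpha> (Nseq \<alpha> i)"
    unfolding i using best_approximation_Nseq approx_error_pos[OF lin_indep] by blast
  then show "approx_error \<alpha> (Nseq \<alpha> i) > 0"
    using approx_error_pos[OF lin_indep] unfolding best_approximation_def by blast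
  show "\<bar>real (Nseq \<alpha> i) * \<alpha>$j - of_int (zvec \<alpha> i $ j)\<bar> \<le> approx_error \<alpha> (Nseq \<alpha> i)" for j
    using int_dist_le_approx_error[of "Nseq \<alpha> i" \<alpha> j] unfolding zvec_def int_dist_eq_round by simp
qed

lemma Nseq_growth:
  obtains C where "C > 1"
    "\<And>i. i \<ge> 1 \<Longrightarrow> Nseq \<alpha> i < Nseq \<alpha> (Suc i) \<and> real (Nseq \<alpha> (Suc i)) \<le> C * real (Nseq \<alpha> i)"
proof -
  obtain c where c: "c > 0" "\<And>N. N \<ge> 1 \<Longrightarrow> c \<le> real N * approx_error \<alpha> N ^ CARD('n)"
    using badly_approximable by blast
  have grow: "real (Nseq \<alpha> (Suc i)) \<le> 2 ^ CARD('n) / c * real (Nseq \<alpha> i)" if i1: "i \<ge> 1" for i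
  proof -
    obtain k where i: "i = Suc k" using i1 by (cases i) auto
    interpret L: best_approx_lattice \<alpha> "Nseq \<alpha> i" "zvec \<alpha> i"
      using best_approx_lattice_Nseq[OF i1] .
    have "real (Nseq \<alpha> (Suc i)) \<le> 2 ^ CARD('n) / L.\<delta> ^ CARD('n)"
      using Nseq_Suc_Suc_le[OF approx_error_pos[OF lin_indep], of k] unfolding i by (simp add: power_divide)
    also have "\<dots> \<le> 2 ^ CARD('n) / c * real (Nseq \<alpha> i)"
      using c(2)[OF L.N_ge_1] c(1) L.error_pos by (simp add: field_simps)
    finally show ?thesis .
  qed
  have mono: "Nseq \<alpha> i < Nseq \<alpha> (Suc i)" if "i \<ge> 1" for i
    using that Nseq_strict_mono[OF approx_error_pos[OF lin_indep]] by (cases i) auto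
  show ?thesis
  proof (rule that)
    show "max 2 (2 ^ CARD('n) / c) > 1" by simp
    fix i :: nat assume i: "i \<ge> 1"
    have "2 ^ CARD('n) / c * real (Nseq \<alpha> i) \<le> max 2 (2 ^ CARD('n) / c) * real (Nseq \<alpha> i)"
      by (intro mult_right_mono) auto
    then show "Nseq \<alpha> i < Nseq \<alpha> (Suc i) \<and>
        real (Nseq \<alpha> (Suc i)) \<le> max 2 (2 ^ CARD('n) / c) * real (Nseq \<alpha> i)"
      using grow[OF i] mono[OF i] by linarith
  qed
qed

lemma mesh_ratio_Nseq_bounded:
  obtains C where "\<And>i. i \<ge> 2 \<Longrightarrow> mesh_ratio (rank1_lattice (Nseq \<alpha> i) (zvec \<alpha> i)) \<le> C"
proof -
  obtain c where c: "c > 0" "\<And>N. N \<ge> 1 \<Longrightarrow> c \<le> real N * approx_error \<alpha> N ^ CARD('n)"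
    using badly_approximable by blast
  define d where "d = CARD('n)"
  have "mesh_ratio (rank1_lattice (Nseq \<alpha> i) (zvec \<alpha> i))
      \<le> 4 * (2 * real d + 1) * (2 * real d * (32 * real d) ^ (d - 1) / c + 1)" if "i \<ge> 2" for i
  proof -
    interpret L: best_approx_lattice \<alpha> "Nseq \<alpha> i" "zvec \<alpha> i"
      using best_approx_lattice_Nseq that by simp
    have "2 * real d * (32 * real d) ^ (d - 1) / (real (Nseq \<alpha> i) * L.\<delta> ^ d)
        \<le> 2 * real d * (32 * real d) ^ (d - 1) / c"
      using c(1) c(2)[OF L.N_ge_1] unfolding d_def by (intro divide_left_mono) auto
    then have "4 * (2 * real d + 1) * (2 * real d * (32 * real d) ^ (d - 1) / (real (Nseq \<alpha> i) * L.\<delta> ^ d) + 1)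
        \<le> 4 * (2 * real d + 1) * (2 * real d * (32 * real d) ^ (d - 1) / c + 1)"
      by (intro mult_left_mono add_right_mono) auto
    then show ?thesis
      using L.mesh_ratio_le[OF Nseq_ge_2[OF that]] unfolding d_def by linarith
  qed
  then show ?thesis using that by blast
qed

lemma Nseq_lattice_properties:
  assumes "i \<ge> 2"
  shows "rank1_admissible (Nseq \<alpha> i) (zvec \<alpha> i)"
    and "card (rank1_lattice (Nseq \<alpha> i) (zvec \<alpha> i)) = Nseq \<alpha> i"
proof -
  have L: "best_approx_lattice \<alpha> (Nseq \<alpha> i) (zvec \<alpha> i)"
    using assms by (intro best_approx_lattice_Nseq) simp
  show "rank1_admissible (Nseq \<alpha> i) (zvec \<alpha> i)" by (rule best_approx_lattice.rank1_admissible[OF L])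
  show "card (rank1_lattice (Nseq \<alpha> i) (zvec \<alpha> i)) = Nseq \<alpha> i"
    by (rule best_approx_lattice.card_rank1_lattice[OF L])
qed

end

theorem mainTheorem6:
  fixes \<alpha> :: "real^'n::finite"
  assumes "rat_lin_indep_1 \<alpha>"
    and "span_is_field \<alpha>"
  shows "(\<forall>i\<ge>2. rank1_admissible (Nseq \<alpha> i) (zvec \<alpha> i) \<and>
                card (rank1_lattice (Nseq \<alpha> i) (zvec \<alpha> i)) = Nseq \<alpha> i)
         \<and> quasi_uniform_family 2 (\<lambda>i. rank1_lattice (Nseq \<alpha> i) (zvec \<alpha> i))"
proof -
  interpret number_field_basis \<alpha> using assms by unfold_locales
  obtain c where c: "c > 1"
    "\<And>i. i \<ge> 1 \<Longrightarrow> Nseq \<alpha> i < Nseq \<alpha> (Suc i) \<and> real (Nseq \<alpha> (Suc i)) \<le> c * real (Nseq \<alpha> i)"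
    using Nseq_growth by blast
  obtain C where mesh: "\<And>i. i \<ge> 2 \<Longrightarrow> mesh_ratio (rank1_lattice (Nseq \<alpha> i) (zvec \<alpha> i)) \<le> C"
    using mesh_ratio_Nseq_bounded by blast
  have "\<forall>i\<ge>2. card (rank1_lattice (Nseq \<alpha> i) (zvec \<alpha> i))
      < card (rank1_lattice (Nseq \<alpha> (Suc i)) (zvec \<alpha> (Suc i))) \<and>
      real (card (rank1_lattice (Nseq \<alpha> (Suc i)) (zvec \<alpha> (Suc i))))
      \<le> c * real (card (rank1_lattice (Nseq \<alpha> i) (zvec \<alpha> i)))"
    using Nseq_lattice_properties(2) c(2) by simp
  then show ?thesis
    unfolding quasi_uniform_family_def
    using Nseq_lattice_properties c(1) mesh Nseq_ge_2
    by (auto simp: finite_rank1_lattice rank1_lattice_subset_unit_cube)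
qed

end
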